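(* Let $g$ be a positive integer. Then there exists $c=c(g)>0$ such that for every integer $n\geq 3$ there exist a set of $n$ points and a set of $n$ open axis-parallel rectangles in $\mathbb{R}^2$ whose incidence graph $G$ has girth at least $g$ and at least $c\,n\log\log n$ edges.
   Context: An open axis-parallel rectangle is a set $(a,c)\times(b,d)\subset\mathbb{R}^2$. The incidence graph of a set $P$ of points and a set $\mathcal{R}$ of rectangles is the bipartite graph with vertex classes $P$ and $\mathcal{R}$, where $p\in P$ and $R\in\mathcal{R}$ are adjacent iff $p\in R$. The girth of a graph is the length of its shortest cycle. *)

theory Defs
  imports "HOL-Analysis.Analysis"
begin

definition open_rect :: "real \<Rightarrow> real \<Rightarrow> real \<Rightarrow> real \<Rightarrow> (real \<times> real) set" where
  "open_rect a b c d = {(x, y). a < x \<and> x < c \<and> b < y \<and> y < d}"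

definition is_open_rect :: "(real \<times> real) set \<Rightarrow> bool" where
  "is_open_rect S \<longleftrightarrow> (\<exists>a b c d. S = open_rect a b c d)"

definition incidence_adj ::
  "(real \<times> real) set \<Rightarrow> (real \<times> real) set set
   \<Rightarrow> ((real \<times> real) + (real \<times> real) set) \<Rightarrow> ((real \<times> real) + (real \<times> real) set) \<Rightarrow> bool" where
  "incidence_adj P R u v \<longleftrightarrow>
     (\<exists>p S. p \<in> P \<and> S \<in> R \<and> p \<in> S \<and> ((u = Inl p \<and> v = Inr S) \<or> (u = Inr S \<and> v = Inl p)))"

definition incidence_edges :: "(real \<times> real) set \<Rightarrow> (real \<times> real) set set \<Rightarrow> nat" where
  "incidence_edges P R = card {(p, S). p \<in> P \<and> S \<in> R \<and> p \<in> S}"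

definition has_cycle_of_length :: "('v \<Rightarrow> 'v \<Rightarrow> bool) \<Rightarrow> nat \<Rightarrow> bool" where
  "has_cycle_of_length E k \<longleftrightarrow>
     3 \<le> k \<and> (\<exists>vs. length vs = k \<and> distinct vs \<and> (\<forall>i<k. E (vs ! i) (vs ! ((i + 1) mod k))))"

text \<open>Girth at least g: every cycle has length at least g (acyclic graphs have infinite girth).\<close>
definition girth_at_least :: "('v \<Rightarrow> 'v \<Rightarrow> bool) \<Rightarrow> nat \<Rightarrow> bool" where
  "girth_at_least E g \<longleftrightarrow> (\<forall>k. has_cycle_of_length E k \<longrightarrow> g \<le> k)"

end

theory Submission
  imports Defs
begin

(* A level-d configuration has girth at least g and every point in at least d + 1 rectangles.
   The next level consists of N copies of it, stacked in horizontal strips, and M tall "blocks"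
   crossing all strips: each copy is reparametrised along the x-axis so that its points, in
   increasing order of x, fall into distinct blocks, which gives every point one more rectangle.
   Which copies meet which blocks is a bipartite graph built greedily, each new edge joining
   vertices at distance at least g - 1 in the graph of the earlier edges. Collapsing every copy
   to a single vertex turns a walk between the ends of a new incidence into a walk of that
   bipartite graph, so no cycle shorter than g appears. The sizes grow doubly exponentially
   in d, so d can be taken of order log log n; isolated points and rectangles fill up to n. *)

section \<open>Walks and girth\<close>

inductive walk :: "('v \<Rightarrow> 'v \<Rightarrow> bool) \<Rightarrow> 'v \<Rightarrow> 'v \<Rightarrow> nat \<Rightarrow> bool" for E where
  walk_Nil: "walk E u u 0"
| walk_Cons: "E u w \<Longrightarrow> walk E w v n \<Longrightarrow> walk E u v (Suc n)"

lemma walk_snoc: "walk E u v n \<Longrightarrow> E v w \<Longrightarrow> walk E u w (Suc n)"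
  by (induction rule: walk.induct) (auto intro: walk.intros)

lemma walk_sym:
  assumes "\<And>a b. E a b \<Longrightarrow> E b a"
  shows "walk E u v n \<Longrightarrow> walk E v u n"
  by (induction rule: walk.induct) (auto intro: walk.intros walk_snoc assms)

lemma walk_map:
  assumes "\<And>a b. E a b \<Longrightarrow> \<phi> a = \<phi> b \<or> E' (\<phi> a) (\<phi> b)"
  shows "walk E u v n \<Longrightarrow> \<exists>n'\<le>n. walk E' (\<phi> u) (\<phi> v) n'"
proof (induction rule: walk.induct)
  case (walk_Nil u)
  then show ?case by (auto intro: walk.intros)
next
  case (walk_Cons u w v n)
  then obtain n' where "n' \<le> n" "walk E' (\<phi> w) (\<phi> v) n'" by auto
  with assms[OF walk_Cons(1)] show ?case
    by (metis Suc_le_mono le_SucI walk.walk_Cons)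
qed

lemma walk_nth:
  assumes "\<And>i. Suc i < length vs \<Longrightarrow> E (vs ! i) (vs ! Suc i)" and "t < length vs"
  shows "walk E (vs ! 0) (vs ! t) t"
  using assms(2) by (induction t) (auto intro: walk.intros walk_snoc assms(1))

lemma card_walks_le:
  assumes "\<And>v. finite {w. E v w}" and "\<And>v. card {w. E v w} \<le> D"
  shows "finite {v. walk E u v l} \<and> card {v. walk E u v l} \<le> D ^ l"
proof (induction l arbitrary: u)
  case 0
  have "{v. walk E u v 0} = {u}" by (auto intro: walk.intros elim: walk.cases)
  then show ?case by simp
next
  case (Suc l)
  have eq: "{v. walk E u v (Suc l)} = (\<Union>w\<in>{w. E u w}. {v. walk E w v l})"
    by (auto intro: walk.intros elim: walk.cases)
  have "card (\<Union>w\<in>{w. E u w}. {v. walk E w v l}) \<le> (\<Sum>w\<in>{w. E u w}. card {v. walk E w v l})"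
    by (rule card_UN_le[OF assms(1)])
  also have "\<dots> \<le> (\<Sum>w\<in>{w. E u w}. D ^ l)" by (rule sum_mono) (use Suc.IH in auto)
  also have "\<dots> = card {w. E u w} * D ^ l" by simp
  also have "\<dots> \<le> D * D ^ l" using assms(2) by (rule mult_right_mono) simp
  finally show ?case using eq assms(1) Suc.IH by auto
qed

lemma card_short_walks_le:
  assumes "\<And>v. finite {w. E v w}" and "\<And>v. card {w. E v w} \<le> D" and "1 \<le> D"
  shows "finite {v. \<exists>l<G. walk E u v l} \<and> card {v. \<exists>l<G. walk E u v l} \<le> G * D ^ G"
proof -
  have eq: "{v. \<exists>l<G. walk E u v l} = (\<Union>l<G. {v. walk E u v l})" by auto
  have "card (\<Union>l<G. {v. walk E u v l}) \<le> (\<Sum>l<G. card {v. walk E u v l})"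
    by (rule card_UN_le) auto
  also have "\<dots> \<le> (\<Sum>l<G. D ^ G)"
  proof (rule sum_mono)
    fix l assume "l \<in> {..<G}"
    then have "D ^ l \<le> D ^ G" using assms(3) by (intro power_increasing) auto
    then show "card {v. walk E u v l} \<le> D ^ G"
      using card_walks_le[where E = E and D = D and u = u and l = l] assms by fastforce
  qed
  finally show ?thesis using eq card_walks_le[where E = E and D = D and u = u] assms by auto
qed

lemma girth_at_least_le: "girth_at_least E g \<Longrightarrow> g' \<le> g \<Longrightarrow> girth_at_least E g'"
  unfolding girth_at_least_def by auto

lemma girth_at_least_hom:
  assumes girth: "girth_at_least E g"
    and hom: "\<And>u v. E' u v \<Longrightarrow> E (H u) (H v)"
    and inj: "inj_on H {u. \<exists>v. E' u v}"
  shows "girth_at_least E' g"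
  unfolding girth_at_least_def
proof (intro allI impI)
  fix k assume "has_cycle_of_length E' k"
  then obtain vs where k: "3 \<le> k" "length vs = k" and "distinct vs"
    and adj: "\<forall>i<k. E' (vs ! i) (vs ! ((i + 1) mod k))"
    unfolding has_cycle_of_length_def by auto
  have "set vs \<subseteq> {u. \<exists>v. E' u v}"
  proof
    fix x assume "x \<in> set vs"
    then obtain i where "i < k" "x = vs ! i" using k by (auto simp: in_set_conv_nth)
    then show "x \<in> {u. \<exists>v. E' u v}" using adj by blast
  qed
  then have "distinct (map H vs)"
    using \<open>distinct vs\<close> inj_on_subset[OF inj] by (simp add: distinct_map)
  moreover have "\<forall>i<k. E (map H vs ! i) (map H vs ! ((i + 1) mod k))"
    using adj hom k by auto
  ultimately have "has_cycle_of_length E k"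
    unfolding has_cycle_of_length_def using k by (intro conjI exI[of _ "map H vs"]) auto
  then show "g \<le> k" using girth unfolding girth_at_least_def by auto
qed

lemma girth_at_least_subgraph:
  "girth_at_least E g \<Longrightarrow> (\<And>u v. E' u v \<Longrightarrow> E u v) \<Longrightarrow> girth_at_least E' g"
  using girth_at_least_hom[of E g E' id] by auto

definition graph_image :: "('a \<Rightarrow> 'b) \<Rightarrow> ('a \<Rightarrow> 'a \<Rightarrow> bool) \<Rightarrow> 'b \<Rightarrow> 'b \<Rightarrow> bool" where
  "graph_image f E u v \<longleftrightarrow> (\<exists>a b. u = f a \<and> v = f b \<and> E a b)"

lemma girth_at_least_graph_image:
  assumes girth: "girth_at_least E g" and inj: "inj_on f {a. \<exists>b. E a b \<or> E b a}"
  shows "girth_at_least (graph_image f E) g"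
proof -
  define V where "V = {a. \<exists>b. E a b \<or> E b a}"
  have inv: "the_inv_into V f (f a) = a \<and> the_inv_into V f (f b) = b" if "E a b" for a b
    using the_inv_into_f_f[OF inj[folded V_def]] that unfolding V_def by blast
  show ?thesis
  proof (rule girth_at_least_hom[OF girth])
    fix u v assume "graph_image f E u v"
    then show "E (the_inv_into V f u) (the_inv_into V f v)"
      unfolding graph_image_def using inv by auto
  next
    have "{u. \<exists>v. graph_image f E u v} \<subseteq> f ` V"
      unfolding graph_image_def V_def by auto
    then show "inj_on (the_inv_into V f) {u. \<exists>v. graph_image f E u v}"
      using inj_on_the_inv_into[OF inj[folded V_def]] inj_on_subset by blast
  qed
qed

definition graph_of_edges :: "('v \<times> 'v) list \<Rightarrow> 'v \<Rightarrow> 'v \<Rightarrow> bool" where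
  "graph_of_edges es a b \<longleftrightarrow> (a, b) \<in> set es \<or> (b, a) \<in> set es"

definition add_edges :: "('v \<Rightarrow> 'v \<Rightarrow> bool) \<Rightarrow> ('v \<times> 'v) list \<Rightarrow> 'v \<Rightarrow> 'v \<Rightarrow> bool" where
  "add_edges E es a b \<longleftrightarrow> E a b \<or> graph_of_edges es a b"

lemma add_edges_Nil [simp]: "add_edges E [] = E"
  by (simp add: fun_eq_iff add_edges_def graph_of_edges_def)

lemma add_edges_append: "add_edges E (es @ fs) = add_edges (add_edges E es) fs"
  by (auto simp: fun_eq_iff add_edges_def graph_of_edges_def)

lemma add_edges_sym: "(\<And>a b. E a b \<Longrightarrow> E b a) \<Longrightarrow> add_edges E es a b \<Longrightarrow> add_edges E es b a"
  unfolding add_edges_def graph_of_edges_def by blast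

lemma cycle_rotate:
  assumes "\<forall>i<length vs. E (vs ! i) (vs ! ((i + 1) mod length vs))"
  shows "\<forall>i<length vs. E (rotate n vs ! i) (rotate n vs ! ((i + 1) mod length vs))"
proof (intro allI impI)
  fix i assume i: "i < length vs"
  then have "0 < length vs" by linarith
  then have "(i + 1) mod length vs < length vs" by simp
  then have "rotate n vs ! ((i + 1) mod length vs) = vs ! ((n + (i + 1) mod length vs) mod length vs)"
    by (rule nth_rotate)
  also have "(n + (i + 1) mod length vs) mod length vs = ((n + i) mod length vs + 1) mod length vs"
    by (simp add: mod_simps)
  finally have "rotate n vs ! ((i + 1) mod length vs) = vs ! (((n + i) mod length vs + 1) mod length vs)" .
  moreover have "(n + i) mod length vs < length vs" using \<open>0 < length vs\<close> by simp
  ultimately show "E (rotate n vs ! i) (rotate n vs ! ((i + 1) mod length vs))"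
    using assms i by (simp add: nth_rotate)
qed

lemma walk_around_cycle:
  assumes k: "3 \<le> length ws" and dist: "distinct ws"
    and adj: "\<forall>t<length ws. add_edges E [(u, v)] (ws ! t) (ws ! ((t + 1) mod length ws))"
    and uv: "(ws ! (length ws - 1) = u \<and> ws ! 0 = v) \<or> (ws ! (length ws - 1) = v \<and> ws ! 0 = u)"
  shows "walk E (ws ! 0) (ws ! (length ws - 1)) (length ws - 1)"
proof (rule walk_nth)
  let ?k = "length ws"
  have idx: "a = b" if "a < ?k" "b < ?k" "ws ! a = ws ! b" for a b
    using that dist nth_eq_iff_index_eq by metis
  show "E (ws ! t) (ws ! Suc t)" if t: "Suc t < ?k" for t
  proof (rule ccontr)
    assume "\<not> E (ws ! t) (ws ! Suc t)"
    moreover have "add_edges E [(u, v)] (ws ! t) (ws ! Suc t)"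
      using adj t by (metis Suc_eq_plus1 Suc_lessD mod_less)
    ultimately have "(ws ! t = ws ! (?k - 1) \<and> ws ! Suc t = ws ! 0) \<or>
        (ws ! t = ws ! 0 \<and> ws ! Suc t = ws ! (?k - 1))"
      using uv unfolding add_edges_def graph_of_edges_def by auto
    then show False
    proof
      assume "ws ! t = ws ! (?k - 1) \<and> ws ! Suc t = ws ! 0"
      then show False using idx[of t "?k - 1"] t k by simp
    next
      assume ends: "ws ! t = ws ! 0 \<and> ws ! Suc t = ws ! (?k - 1)"
      moreover have ne: "ws \<noteq> []" using k by auto
      ultimately have "t = 0" using idx[of t 0] t by simp
      then show False using ends ne idx[of "Suc t" "?k - 1"] t k by simp
    qed
  qed
qed (use k in simp)

text \<open>A cycle through the new edge \<open>uv\<close> consists of that edge and a walk from \<open>u\<close> to \<open>v\<close>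
  in the old graph; rotating the cycle puts the new edge last.\<close>

lemma girth_at_least_add_edge:
  assumes girth: "girth_at_least E g" and sym: "\<And>a b. E a b \<Longrightarrow> E b a"
    and far: "\<And>l. walk E u v l \<Longrightarrow> g \<le> l + 1"
  shows "girth_at_least (add_edges E [(u, v)]) g"
  unfolding girth_at_least_def
proof (intro allI impI)
  fix k assume "has_cycle_of_length (add_edges E [(u, v)]) k"
  then obtain vs where k: "3 \<le> k" "length vs = k" and dist: "distinct vs"
    and adj: "\<forall>i<k. add_edges E [(u, v)] (vs ! i) (vs ! ((i + 1) mod k))"
    unfolding has_cycle_of_length_def by auto
  show "g \<le> k"
  proof (cases "\<forall>i<k. E (vs ! i) (vs ! ((i + 1) mod k))")
    case True
    then have "has_cycle_of_length E k" using k dist unfolding has_cycle_of_length_def by auto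
    then show ?thesis using girth unfolding girth_at_least_def by auto
  next
    case False
    then obtain i where i: "i < k" "\<not> E (vs ! i) (vs ! ((i + 1) mod k))" by auto
    define ws where "ws = rotate (Suc i) vs"
    have ws: "length ws = k" "distinct ws" using k dist unfolding ws_def by auto
    have ws_adj: "\<forall>t<k. add_edges E [(u, v)] (ws ! t) (ws ! ((t + 1) mod k))"
      using cycle_rotate[of vs "add_edges E [(u, v)]" "Suc i"] adj k unfolding ws_def by simp
    have ws_nth: "ws ! t = vs ! ((Suc i + t) mod k)" if "t < k" for t
      using that k nth_rotate[of t vs "Suc i"] unfolding ws_def by metis
    have "(Suc i + (k - 1)) mod k = i" using i k by simp
    then have ends: "ws ! (k - 1) = vs ! i" "ws ! 0 = vs ! ((i + 1) mod k)"
      using k ws_nth by auto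
    have uv: "(ws ! (k - 1) = u \<and> ws ! 0 = v) \<or> (ws ! (k - 1) = v \<and> ws ! 0 = u)"
      using adj i unfolding ends add_edges_def graph_of_edges_def by auto
    have "walk E (ws ! 0) (ws ! (k - 1)) (k - 1)"
      using walk_around_cycle[of ws E u v, unfolded ws(1)] ws(2) ws_adj uv k by blast
    then have "walk E u v (k - 1)" using uv walk_sym[OF sym] by auto
    then show ?thesis using far k by fastforce
  qed
qed

lemma girth_at_least_add_edges:
  assumes girth: "girth_at_least E g" and sym: "\<And>a b. E a b \<Longrightarrow> E b a"
    and far: "\<And>i l. i < length es \<Longrightarrow>
      walk (add_edges E (take i es)) (fst (es ! i)) (snd (es ! i)) l \<Longrightarrow> g \<le> l + 1"
  shows "girth_at_least (add_edges E es) g"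
  using far
proof (induction es rule: rev_induct)
  case Nil
  then show ?case using girth by simp
next
  case (snoc e es)
  have "girth_at_least (add_edges E es) g"
  proof (rule snoc.IH)
    fix i l assume "i < length es" "walk (add_edges E (take i es)) (fst (es ! i)) (snd (es ! i)) l"
    then show "g \<le> l + 1" using snoc.prems[of i l] by (simp add: nth_append)
  qed
  moreover have "walk (add_edges E es) (fst e) (snd e) l \<Longrightarrow> g \<le> l + 1" for l
    using snoc.prems[of "length es" l] by simp
  moreover have "add_edges E es a b \<Longrightarrow> add_edges E es b a" for a b
    using add_edges_sym[of E, OF sym] by blast
  ultimately show ?case
    using girth_at_least_add_edge[of "add_edges E es" g "fst e" "snd e"] by (simp add: add_edges_append)
qed

definition far_edge_list :: "nat \<Rightarrow> ('v \<times> 'v) list \<Rightarrow> bool" where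
  "far_edge_list G es \<longleftrightarrow> (\<forall>i<length es. \<forall>l.
     walk (graph_of_edges (take i es)) (fst (es ! i)) (snd (es ! i)) l \<longrightarrow> G \<le> l)"

lemma far_edge_list_snoc:
  "far_edge_list G (es @ [e]) \<longleftrightarrow>
     far_edge_list G es \<and> (\<forall>l. walk (graph_of_edges es) (fst e) (snd e) l \<longrightarrow> G \<le> l)"
  unfolding far_edge_list_def by (auto simp: nth_append less_Suc_eq)

lemma add_edges_collapse:
  assumes collapse: "\<And>a b. E a b \<Longrightarrow> \<phi> a = \<phi> b" and "add_edges E es a b"
  shows "\<phi> a = \<phi> b \<or> graph_of_edges (map (map_prod \<phi> \<phi>) es) (\<phi> a) (\<phi> b)"
proof -
  from assms(2) consider "E a b" | "(a, b) \<in> set es" | "(b, a) \<in> set es"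
    unfolding add_edges_def graph_of_edges_def by blast
  then show ?thesis
  proof cases
    case 1
    then show ?thesis using collapse by blast
  next
    case 2
    then have "(\<phi> a, \<phi> b) \<in> set (map (map_prod \<phi> \<phi>) es)" unfolding set_map by (rule rev_image_eqI) simp
    then show ?thesis unfolding graph_of_edges_def by blast
  next
    case 3
    then have "(\<phi> b, \<phi> a) \<in> set (map (map_prod \<phi> \<phi>) es)" unfolding set_map by (rule rev_image_eqI) simp
    then show ?thesis unfolding graph_of_edges_def by blast
  qed
qed

text \<open>Collapsing the edges of \<open>E\<close> by \<open>\<phi>\<close> turns a walk between the ends of a new edge into
  a walk between their images along the images of the earlier new edges.\<close>

lemma girth_at_least_add_far_edges:
  assumes girth: "girth_at_least E g" and sym: "\<And>a b. E a b \<Longrightarrow> E b a"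
    and collapse: "\<And>a b. E a b \<Longrightarrow> \<phi> a = \<phi> b"
    and far: "far_edge_list (g - 1) (map (map_prod \<phi> \<phi>) es)"
  shows "girth_at_least (add_edges E es) g"
proof (rule girth_at_least_add_edges[OF girth sym])
  fix i l assume i: "i < length es"
    and w: "walk (add_edges E (take i es)) (fst (es ! i)) (snd (es ! i)) l"
  have hom: "\<phi> a = \<phi> b \<or> graph_of_edges (map (map_prod \<phi> \<phi>) (take i es)) (\<phi> a) (\<phi> b)"
    if "add_edges E (take i es) a b" for a b
    using collapse that by (rule add_edges_collapse)
  obtain l' where l': "l' \<le> l"
    "walk (graph_of_edges (map (map_prod \<phi> \<phi>) (take i es))) (\<phi> (fst (es ! i))) (\<phi> (snd (es ! i))) l'"
    using walk_map[where E = "add_edges E (take i es)" and \<phi> = \<phi>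
        and E' = "graph_of_edges (map (map_prod \<phi> \<phi>) (take i es))", OF hom w] by blast
  have "fst (map (map_prod \<phi> \<phi>) es ! i) = \<phi> (fst (es ! i))"
    "snd (map (map_prod \<phi> \<phi>) es ! i) = \<phi> (snd (es ! i))"
    "take i (map (map_prod \<phi> \<phi>) es) = map (map_prod \<phi> \<phi>) (take i es)"
    using i by (simp_all add: take_map)
  then have "g - 1 \<le> l'" using far i l'(2) unfolding far_edge_list_def by (metis length_map)
  then show "g \<le> l + 1" using l'(1) by linarith
qed

definition disjoint_copies :: "nat \<Rightarrow> ('v \<Rightarrow> 'v \<Rightarrow> bool) \<Rightarrow> nat \<times> 'v \<Rightarrow> nat \<times> 'v \<Rightarrow> bool" where
  "disjoint_copies N E x y \<longleftrightarrow> fst x = fst y \<and> fst x < N \<and> E (snd x) (snd y)"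

lemma girth_at_least_disjoint_copies:
  assumes girth: "girth_at_least E g"
  shows "girth_at_least (disjoint_copies N E) g"
  unfolding girth_at_least_def
proof (intro allI impI)
  fix k assume "has_cycle_of_length (disjoint_copies N E) k"
  then obtain vs where k: "3 \<le> k" "length vs = k" and dist: "distinct vs"
    and adj: "\<forall>i<k. disjoint_copies N E (vs ! i) (vs ! ((i + 1) mod k))"
    unfolding has_cycle_of_length_def by auto
  have same_copy: "fst (vs ! i) = fst (vs ! 0)" if "i < k" for i
    using that
  proof (induction i)
    case (Suc i)
    then show ?case using adj[rule_format, of i] by (simp add: disjoint_copies_def)
  qed simp
  have "inj_on snd (set vs)"
    using same_copy k by (force simp: inj_on_def in_set_conv_nth prod_eq_iff)
  then have "distinct (map snd vs)" using dist by (simp add: distinct_map)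
  moreover have "\<forall>i<k. E (map snd vs ! i) (map snd vs ! ((i + 1) mod k))"
    using adj k by (simp add: disjoint_copies_def)
  ultimately have "has_cycle_of_length E k"
    unfolding has_cycle_of_length_def using k by (intro conjI exI[of _ "map snd vs"]) auto
  then show "g \<le> k" using girth unfolding girth_at_least_def by auto
qed

section \<open>A greedy bipartite graph of large girth\<close>

definition bipartite_edges :: "(nat \<times> nat) list \<Rightarrow> ((nat + nat) \<times> (nat + nat)) list" where
  "bipartite_edges es = map (\<lambda>(j, b). (Inl j, Inr b)) es"

lemma bipartite_edges_snoc: "bipartite_edges (es @ [(j, b)]) = bipartite_edges es @ [(Inl j, Inr b)]"
  by (simp add: bipartite_edges_def)

lemma neighbours_bipartite_edges:
  "{w. graph_of_edges (bipartite_edges es) (Inl j) w} = Inr ` {b. (j, b) \<in> set es}"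
  "{w. graph_of_edges (bipartite_edges es) (Inr b) w} = Inl ` {j. (j, b) \<in> set es}"
  unfolding graph_of_edges_def bipartite_edges_def by auto

lemma finite_row: "finite {b. (j, b) \<in> set es}"
  by (rule finite_subset[of _ "snd ` set es"]) force+

lemma finite_col: "finite {j. (j, b) \<in> set es}"
  by (rule finite_subset[of _ "fst ` set es"]) force+

lemma card_set_eq_sum_rows:
  fixes es :: "(nat \<times> nat) list"
  assumes "set es \<subseteq> {..<N} \<times> UNIV"
  shows "card (set es) = (\<Sum>j<N. card {b. (j, b) \<in> set es})"
proof -
  have "set es = (SIGMA j:{..<N}. {b. (j, b) \<in> set es})" using assms by auto
  then have "card (set es) = card (SIGMA j:{..<N}. {b. (j, b) \<in> set es})" by metis
  then show ?thesis by (simp add: finite_row)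
qed

lemma card_set_eq_sum_cols:
  fixes es :: "(nat \<times> nat) list"
  assumes "set es \<subseteq> UNIV \<times> {..<M}"
  shows "card (set es) = (\<Sum>b<M. card {j. (j, b) \<in> set es})"
proof -
  have "card (set es) = card (prod.swap ` set es)" by (rule card_image[symmetric]) auto
  also have "prod.swap ` set es = (SIGMA b:{..<M}. {j. (j, b) \<in> set es})" using assms by force
  finally show ?thesis by (simp add: finite_col)
qed

lemma sum_less_mult_iff:
  fixes r :: "nat \<Rightarrow> nat"
  assumes "\<forall>j<N. r j \<le> m"
  shows "(\<Sum>j<N. r j) < N * m \<longleftrightarrow> (\<exists>j<N. r j < m)"
proof
  assume less: "(\<Sum>j<N. r j) < N * m"
  show "\<exists>j<N. r j < m"
  proof (rule ccontr)
    assume "\<not> (\<exists>j<N. r j < m)"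
    then have "\<forall>j<N. r j = m" using assms by (meson le_antisym not_less)
    then have "(\<Sum>j<N. r j) = (\<Sum>j<N. m)" by simp
    then show False using less by simp
  qed
next
  assume "\<exists>j<N. r j < m"
  then have "(\<Sum>j<N. r j) < (\<Sum>j<N. m)" using assms by (intro sum_strict_mono_ex1) auto
  then show "(\<Sum>j<N. r j) < N * m" by simp
qed

definition bounded_far_edge_list :: "nat \<Rightarrow> nat \<Rightarrow> nat \<Rightarrow> nat \<Rightarrow> nat \<Rightarrow> (nat \<times> nat) list \<Rightarrow> bool" where
  "bounded_far_edge_list N M m k G es \<longleftrightarrow> distinct es \<and> set es \<subseteq> {..<N} \<times> {..<M} \<and>
     (\<forall>j. card {b. (j, b) \<in> set es} \<le> m) \<and> (\<forall>b. card {j. (j, b) \<in> set es} \<le> k) \<and>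
     far_edge_list G (bipartite_edges es)"

lemma short_walks_bipartite_edges:
  assumes "\<forall>j. card {b. (j, b) \<in> set es} \<le> m" "\<forall>b. card {j. (j, b) \<in> set es} \<le> k" "1 \<le> k"
  shows "finite {b. \<exists>l<G. walk (graph_of_edges (bipartite_edges es)) u (Inr b) l} \<and>
    card {b. \<exists>l<G. walk (graph_of_edges (bipartite_edges es)) u (Inr b) l} \<le> G * (m + k) ^ G"
proof -
  let ?E = "graph_of_edges (bipartite_edges es)"
  let ?B = "{b. \<exists>l<G. walk ?E u (Inr b) l}"
  have fin: "finite {w. ?E v w}" and deg: "card {w. ?E v w} \<le> m + k" for v
    using assms(1,2) by (cases v; simp add: neighbours_bipartite_edges card_image finite_row finite_col
        trans_le_add1 trans_le_add2)+
  have ball: "finite {v. \<exists>l<G. walk ?E u v l} \<and> card {v. \<exists>l<G. walk ?E u v l} \<le> G * (m + k) ^ G"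
    using card_short_walks_le[where E = ?E and D = "m + k" and G = G and u = u] fin deg assms(3) by simp
  have sub: "Inr ` ?B \<subseteq> {v. \<exists>l<G. walk ?E u v l}" by auto
  then have "finite (Inr ` ?B :: (nat + nat) set)" using ball finite_subset by blast
  then have "finite ?B" by (rule finite_imageD) simp
  moreover have "card (Inr ` ?B :: (nat + nat) set) \<le> G * (m + k) ^ G"
    using card_mono[OF _ sub] ball by (meson le_trans)
  ultimately show ?thesis by (simp add: card_image)
qed

lemma card_row_snoc:
  "card {b'. (j', b') \<in> set (es @ [(j, b)])} =
     (if j' = j \<and> (j, b) \<notin> set es then Suc (card {b'. (j', b') \<in> set es}) else card {b'. (j', b') \<in> set es})"
proof -
  have "{b'. (j', b') \<in> set (es @ [(j, b)])} =
      (if j' = j then insert b {b'. (j', b') \<in> set es} else {b'. (j', b') \<in> set es})" by auto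
  then show ?thesis by (auto simp: finite_row card_insert_if)
qed

lemma card_col_snoc:
  "card {j'. (j', b') \<in> set (es @ [(j, b)])} =
     (if b' = b \<and> (j, b) \<notin> set es then Suc (card {j'. (j', b') \<in> set es}) else card {j'. (j', b') \<in> set es})"
proof -
  have "{j'. (j', b') \<in> set (es @ [(j, b)])} =
      (if b' = b then insert j {j'. (j', b') \<in> set es} else {j'. (j', b') \<in> set es})" by auto
  then show ?thesis by (auto simp: finite_col card_insert_if)
qed

text \<open>The right vertices that are full or are within distance \<open>G\<close> of \<open>u\<close> are too few to
  exhaust all \<open>M\<close> of them.\<close>

lemma exists_free_right_vertex:
  assumes dist: "distinct es" and sub: "set es \<subseteq> UNIV \<times> {..<M}"
    and rows: "\<forall>j. card {b. (j, b) \<in> set es} \<le> m" and cols: "\<forall>b. card {j. (j, b) \<in> set es} \<le> k"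
    and "1 \<le> k" and room: "length es + k * (G * (m + k) ^ G) < k * M"
  obtains b where "b < M" "card {j. (j, b) \<in> set es} < k"
    "\<forall>l<G. \<not> walk (graph_of_edges (bipartite_edges es)) u (Inr b) l"
proof -
  define full where "full = {b\<in>{..<M}. card {j. (j, b) \<in> set es} = k}"
  define near where "near = {b. \<exists>l<G. walk (graph_of_edges (bipartite_edges es)) u (Inr b) l}"
  have "k * card full = (\<Sum>b\<in>full. card {j. (j, b) \<in> set es})" unfolding full_def by simp
  also have "\<dots> \<le> (\<Sum>b<M. card {j. (j, b) \<in> set es})" unfolding full_def by (intro sum_mono2) auto
  finally have "k * card full \<le> length es"
    using card_set_eq_sum_cols[OF sub] dist by (simp add: distinct_card)
  moreover have near: "finite near" "card near \<le> G * (m + k) ^ G"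
    unfolding near_def using short_walks_bipartite_edges[OF rows cols \<open>1 \<le> k\<close>] by blast+
  ultimately have "k * (card full + card near) \<le> length es + k * (G * (m + k) ^ G)"
    by (simp add: add_mult_distrib2 add_mono)
  also have "\<dots> < k * M" by (rule room)
  finally have "card (full \<union> near) < card {..<M}" using card_Un_le[of full near] by simp
  moreover have "finite (full \<union> near)" using near(1) unfolding full_def by simp
  ultimately have "\<not> {..<M} \<subseteq> full \<union> near" using card_mono by (meson not_le)
  then obtain b where b: "b < M" "b \<notin> full" "b \<notin> near" by auto
  then have "card {j. (j, b) \<in> set es} < k" using cols le_neq_implies_less unfolding full_def by blast
  then show ?thesis using that b unfolding near_def by blast
qed

lemma bounded_far_edge_list_extend:
  assumes inv: "bounded_far_edge_list N M m k G es" and short: "length es < N * m"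
    and "1 \<le> k" "2 \<le> G" and room: "N * m + k * (G * (m + k) ^ G) < k * M"
  shows "\<exists>j b. bounded_far_edge_list N M m k G (es @ [(j, b)])"
proof -
  from inv have dist: "distinct es" and sub: "set es \<subseteq> {..<N} \<times> {..<M}"
    and rows: "\<forall>j. card {b. (j, b) \<in> set es} \<le> m" and cols: "\<forall>b. card {j. (j, b) \<in> set es} \<le> k"
    and far: "far_edge_list G (bipartite_edges es)"
    unfolding bounded_far_edge_list_def by auto
  have "set es \<subseteq> {..<N} \<times> UNIV" "set es \<subseteq> UNIV \<times> {..<M}" using sub by auto
  obtain j where j: "j < N" "card {b. (j, b) \<in> set es} < m"
    using short rows sum_less_mult_iff[of N "\<lambda>j. card {b. (j, b) \<in> set es}" m]
      card_set_eq_sum_rows[OF \<open>set es \<subseteq> {..<N} \<times> UNIV\<close>] dist by (auto simp: distinct_card)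
  have "length es + k * (G * (m + k) ^ G) < k * M" using short room by linarith
  then obtain b where b: "b < M" "card {j. (j, b) \<in> set es} < k"
    and far_b: "\<forall>l<G. \<not> walk (graph_of_edges (bipartite_edges es)) (Inl j) (Inr b) l"
    using exists_free_right_vertex[OF dist \<open>set es \<subseteq> UNIV \<times> {..<M}\<close> rows cols \<open>1 \<le> k\<close>] by blast
  have new: "(j, b) \<notin> set es"
  proof
    assume "(j, b) \<in> set es"
    then have "graph_of_edges (bipartite_edges es) (Inl j) (Inr b)"
      by (force simp: graph_of_edges_def bipartite_edges_def)
    then have "walk (graph_of_edges (bipartite_edges es)) (Inl j) (Inr b) 1" by (auto intro: walk.intros)
    then show False using far_b \<open>2 \<le> G\<close> by auto
  qed
  have "distinct (es @ [(j, b)])" using dist new by simp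
  moreover have "set (es @ [(j, b)]) \<subseteq> {..<N} \<times> {..<M}" using sub j b by auto
  moreover have "\<forall>j'. card {b'. (j', b') \<in> set (es @ [(j, b)])} \<le> m"
    unfolding card_row_snoc using rows j(2) by (auto simp: Suc_le_eq)
  moreover have "\<forall>b'. card {j'. (j', b') \<in> set (es @ [(j, b)])} \<le> k"
    unfolding card_col_snoc using cols b(2) by (auto simp: Suc_le_eq)
  moreover have "far_edge_list G (bipartite_edges (es @ [(j, b)]))"
    unfolding bipartite_edges_snoc far_edge_list_snoc using far far_b by (auto simp: not_less)
  ultimately show ?thesis unfolding bounded_far_edge_list_def by blast
qed

lemma exists_far_bipartite_edge_list:
  assumes "1 \<le> k" "2 \<le> G" "N * m + k * (G * (m + k) ^ G) < k * M"
  shows "\<exists>es. set es \<subseteq> {..<N} \<times> {..<M} \<and> (\<forall>j<N. card {b. (j, b) \<in> set es} = m) \<and>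
    far_edge_list G (bipartite_edges es)"
proof -
  have "\<exists>es. bounded_far_edge_list N M m k G es \<and> length es = t" if "t \<le> N * m" for t
    using that
  proof (induction t)
    case 0
    have "bounded_far_edge_list N M m k G []"
      by (simp add: bounded_far_edge_list_def far_edge_list_def bipartite_edges_def)
    then show ?case by auto
  next
    case (Suc t)
    then obtain es where "bounded_far_edge_list N M m k G es" "length es = t" by auto
    then show ?case using bounded_far_edge_list_extend[OF _ _ assms] Suc.prems by fastforce
  qed
  then obtain es where inv: "bounded_far_edge_list N M m k G es" and len: "length es = N * m"
    by blast
  then have "card (set es) = N * m" "set es \<subseteq> {..<N} \<times> UNIV"
    by (auto simp: bounded_far_edge_list_def distinct_card)
  then have "\<not> (\<exists>j<N. card {b. (j, b) \<in> set es} < m)"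
    using inv sum_less_mult_iff[of N "\<lambda>j. card {b. (j, b) \<in> set es}" m] card_set_eq_sum_rows
    unfolding bounded_far_edge_list_def by auto
  then have "\<forall>j<N. card {b. (j, b) \<in> set es} = m"
    using inv unfolding bounded_far_edge_list_def by (meson le_antisym not_less)
  then show ?thesis using inv unfolding bounded_far_edge_list_def by blast
qed

section \<open>Order-preserving maps\<close>

lemma ex_bij_betw_strict_mono_on:
  fixes X :: "'a::linorder set" and B :: "'b::wellorder set"
  assumes "finite X" "finite B" "card X = card B"
  shows "\<exists>h. bij_betw h X B \<and> strict_mono_on X h"
proof -
  define rank where "rank x = card {y\<in>X. y < x}" for x
  have rank_mono: "strict_mono_on X rank"
  proof (rule strict_mono_onI)
    fix x x' assume "x \<in> X" "x' \<in> X" "x < x'"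
    then have "{y\<in>X. y < x} \<subset> {y\<in>X. y < x'}" by auto
    then show "rank x < rank x'" unfolding rank_def using assms(1) by (intro psubset_card_mono) auto
  qed
  then have inj: "inj_on rank X" by (rule strict_mono_on_imp_inj_on)
  have "rank ` X \<subseteq> {..<card X}"
  proof
    fix r assume "r \<in> rank ` X"
    then obtain x where "x \<in> X" "r = rank x" by auto
    then have "{y\<in>X. y < x} \<subset> X" by auto
    then have "rank x < card X" unfolding rank_def by (rule psubset_card_mono[OF assms(1)])
    then show "r \<in> {..<card X}" using \<open>r = rank x\<close> by simp
  qed
  moreover have "card (rank ` X) = card {..<card X}" using card_image[OF inj] by simp
  ultimately have "rank ` X = {..<card B}" using assms(3) card_subset_eq[of "{..<card X}"] by auto
  then have bij_rank: "bij_betw rank X {..<card B}" using inj by (simp add: bij_betw_def)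
  obtain e where e: "bij_betw e {..<card B} B" "strict_mono_on {..<card B} e"
    using ex_bij_betw_strict_mono_card[OF assms(2)] by blast
  have "strict_mono_on X (e \<circ> rank)"
  proof (rule strict_mono_onI)
    fix x x' assume "x \<in> X" "x' \<in> X" "x < x'"
    then show "(e \<circ> rank) x < (e \<circ> rank) x'"
      using rank_mono e(2) bij_betw_apply[OF bij_rank] by (simp add: strict_mono_onD)
  qed
  then show ?thesis using bij_betw_trans[OF bij_rank e(1)] by blast
qed

lemma strict_mono_glue:
  fixes f :: "real \<Rightarrow> real"
  assumes "strict_mono f" "0 < s"
  shows "strict_mono (\<lambda>z. if z \<le> a then f z else f a + s * (z - a))"
proof (rule strict_monoI)
  fix x y :: real assume "x < y"
  consider "y \<le> a" | "x \<le> a" "a < y" | "a < x" by linarith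
  then show "(if x \<le> a then f x else f a + s * (x - a)) < (if y \<le> a then f y else f a + s * (y - a))"
  proof cases
    case 1
    then show ?thesis using assms(1) \<open>x < y\<close> by (simp add: strict_mono_less)
  next
    case 2
    then have "f x \<le> f a" using assms(1) by (simp add: strict_mono_less_eq)
    moreover have "0 < s * (y - a)" using 2 assms(2) by simp
    ultimately show ?thesis using 2 by simp
  next
    case 3
    then show ?thesis using \<open>x < y\<close> assms(2) by simp
  qed
qed

text \<open>Piecewise linear interpolation: beyond the largest point so far, continue with the slope
  that reaches the next prescribed value.\<close>

lemma strict_mono_extend:
  fixes h :: "real \<Rightarrow> real"
  assumes "finite X" "strict_mono_on X h"
  shows "\<exists>f. strict_mono f \<and> (\<forall>x\<in>X. f x = h x)"
  using assms
proof (induction X arbitrary: h rule: finite_linorder_max_induct)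
  case empty
  have "strict_mono (\<lambda>x::real. x)" by (rule strict_monoI)
  then show ?case by blast
next
  case (insert b X)
  show ?case
  proof (cases "X = {}")
    case True
    have "strict_mono (\<lambda>z. z - b + h b)" by (rule strict_monoI) simp
    then show ?thesis using True by auto
  next
    case False
    define a where "a = Max X"
    have a: "a \<in> X" "a < b" "\<forall>x\<in>X. x \<le> a"
      using insert.hyps False unfolding a_def by auto
    obtain f where f: "strict_mono f" "\<forall>x\<in>X. f x = h x"
      using insert.IH insert.prems monotone_on_subset[of "insert b X" _ _ h X] by blast
    have "h a < h b" using insert.prems a by (auto dest: strict_mono_onD)
    define s where "s = (h b - h a) / (b - a)"
    have "0 < s" "f a + s * (b - a) = h b"
      using \<open>h a < h b\<close> a f unfolding s_def by auto
    then show ?thesis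
      using strict_mono_glue[OF f(1) \<open>0 < s\<close>, of a] a f
      by (intro exI[of _ "\<lambda>z. if z \<le> a then f z else f a + s * (z - a)"]) auto
  qed
qed

section \<open>Configurations of points and rectangles\<close>

definition rect_config :: "(real \<times> real) set \<Rightarrow> (real \<times> real) set set \<Rightarrow> bool" where
  "rect_config P R \<longleftrightarrow> finite P \<and> finite R \<and> (\<forall>S\<in>R. is_open_rect S)"

definition point_degree :: "(real \<times> real) set set \<Rightarrow> real \<times> real \<Rightarrow> nat" where
  "point_degree R p = card {S\<in>R. p \<in> S}"

lemma incidence_edges_eq_sum_point_degree:
  assumes "finite P" "finite R"
  shows "incidence_edges P R = (\<Sum>p\<in>P. point_degree R p)"
proof -
  have "{(p, S). p \<in> P \<and> S \<in> R \<and> p \<in> S} = (SIGMA p:P. {S\<in>R. p \<in> S})" by auto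
  then show ?thesis unfolding incidence_edges_def point_degree_def using assms by simp
qed

lemma incidence_adj_simps [simp]:
  "incidence_adj P R (Inl p) (Inr S) \<longleftrightarrow> p \<in> P \<and> S \<in> R \<and> p \<in> S"
  "incidence_adj P R (Inr S) (Inl p) \<longleftrightarrow> p \<in> P \<and> S \<in> R \<and> p \<in> S"
  "\<not> incidence_adj P R (Inl p) (Inl p')"
  "\<not> incidence_adj P R (Inr S) (Inr S')"
  unfolding incidence_adj_def by blast+

lemma incidence_adjE:
  assumes "incidence_adj P R u v"
  obtains p S where "p \<in> P" "S \<in> R" "p \<in> S" "(u = Inl p \<and> v = Inr S) \<or> (u = Inr S \<and> v = Inl p)"
  using assms unfolding incidence_adj_def by blast

lemma incidence_adj_sym: "incidence_adj P R u v \<Longrightarrow> incidence_adj P R v u"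
  unfolding incidence_adj_def by blast

lemma mem_open_rect [simp]: "(x, y) \<in> open_rect a b c d \<longleftrightarrow> a < x \<and> x < c \<and> b < y \<and> y < d"
  unfolding open_rect_def by auto

text \<open>The parameters of an empty rectangle are not unique; any choice serves.\<close>

definition rect_params :: "(real \<times> real) set \<Rightarrow> real \<times> real \<times> real \<times> real" where
  "rect_params S = (SOME q. S = (case q of (a, b, c, d) \<Rightarrow> open_rect a b c d))"

lemma rect_params_eq:
  assumes "is_open_rect S" "rect_params S = (a, b, c, d)"
  shows "S = open_rect a b c d"
proof -
  obtain a' b' c' d' where "S = open_rect a' b' c' d'" using assms(1) unfolding is_open_rect_def by blast
  then have "\<exists>q. S = (case q of (a, b, c, d) \<Rightarrow> open_rect a b c d)" by (intro exI[of _ "(a', b', c', d')"]) simp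
  then have "S = (case rect_params S of (a, b, c, d) \<Rightarrow> open_rect a b c d)"
    unfolding rect_params_def by (rule someI_ex)
  then show ?thesis using assms(2) by simp
qed

lemma bounded_open_rect:
  assumes "is_open_rect S"
  shows "bounded S"
proof -
  obtain a b c d where "S = open_rect a b c d" using assms unfolding is_open_rect_def by blast
  then have "S \<subseteq> {a..c} \<times> {b..d}" by (auto simp: open_rect_def)
  then show ?thesis by (rule bounded_subset[rotated]) (intro bounded_Times compact_imp_bounded compact_Icc)
qed

section \<open>Stacking copies of a configuration\<close>

lemma nat_eq_if_dist_less_1: "real i < real j + 1 \<Longrightarrow> real j < real i + 1 \<Longrightarrow> i = j"
  by linarith

definition squash :: "real \<Rightarrow> real" where
  "squash y = arctan y / pi + 1 / 2"

lemma squash_less_iff [simp]: "squash x < squash y \<longleftrightarrow> x < y"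
  unfolding squash_def by (simp add: divide_less_cancel arctan_less_iff)

lemma squash_eq_iff [simp]: "squash x = squash y \<longleftrightarrow> x = y"
  by (metis not_less_iff_gr_or_eq squash_less_iff)

lemma squash_bounds: "0 < squash y" "squash y < 1"
  using arctan_bounded[of y] unfolding squash_def by (auto simp: field_simps)

text \<open>Copy \<open>j\<close> of a configuration is squeezed into the horizontal strip \<open>2j < y < 2j + 1\<close>, and
  its \<open>x\<close>-axis is reparametrised by the increasing map \<open>F j\<close>.\<close>

definition stack_point :: "(nat \<Rightarrow> real \<Rightarrow> real) \<Rightarrow> nat \<Rightarrow> real \<times> real \<Rightarrow> real \<times> real" where
  "stack_point F j z = (F j (fst z), squash (snd z) + 2 * real j)"

definition stack_rect :: "(nat \<Rightarrow> real \<Rightarrow> real) \<Rightarrow> nat \<Rightarrow> (real \<times> real) set \<Rightarrow> (real \<times> real) set" where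
  "stack_rect F j S = (case rect_params S of (a, b, c, d) \<Rightarrow>
     open_rect (F j a) (squash b + 2 * real j) (F j c) (squash d + 2 * real j))"

lemma is_open_rect_stack_rect: "is_open_rect (stack_rect F j S)"
  by (cases "rect_params S") (auto simp: stack_rect_def is_open_rect_def)

lemma stack_point_mem_stack_rect:
  assumes "strict_mono (F j')" "is_open_rect S"
  shows "stack_point F j z \<in> stack_rect F j' S \<longleftrightarrow> j = j' \<and> z \<in> S"
proof -
  obtain a b c d where r: "rect_params S = (a, b, c, d)" by (cases "rect_params S")
  obtain x y where z: "z = (x, y)" by (cases z)
  have "j = j'" if "squash b + 2 * real j' < squash y + 2 * real j" "squash y + 2 * real j < squash d + 2 * real j'"
    using that squash_bounds[of b] squash_bounds[of y] squash_bounds[of d]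
    by (intro nat_eq_if_dist_less_1) linarith+
  moreover have "stack_point F j z \<in> stack_rect F j' S \<longleftrightarrow> F j' a < F j x \<and> F j x < F j' c \<and>
      squash b + 2 * real j' < squash y + 2 * real j \<and> squash y + 2 * real j < squash d + 2 * real j'"
    unfolding stack_point_def stack_rect_def r z by simp
  moreover have "z \<in> S \<longleftrightarrow> a < x \<and> x < c \<and> b < y \<and> y < d"
    unfolding z rect_params_eq[OF assms(2) r] by simp
  ultimately show ?thesis by (auto simp: strict_mono_less[OF assms(1)])
qed

lemma stack_rect_inj:
  assumes "strict_mono (F j)" "is_open_rect S" "is_open_rect S'" "stack_rect F j S = stack_rect F j S'"
  shows "S = S'"
  using stack_point_mem_stack_rect[where F = F and j' = j and S = S, OF assms(1,2)]
    stack_point_mem_stack_rect[where F = F and j' = j and S = S', OF assms(1,3)] assms(4) by blast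

lemma stack_point_eq_iff:
  assumes "strict_mono (F j)"
  shows "stack_point F j z = stack_point F j' z' \<longleftrightarrow> j = j' \<and> z = z'"
proof
  assume eq: "stack_point F j z = stack_point F j' z'"
  then have y: "squash (snd z) + 2 * real j = squash (snd z') + 2 * real j'"
    unfolding stack_point_def by simp
  then have "j = j'"
    using squash_bounds[of "snd z"] squash_bounds[of "snd z'"] by (intro nat_eq_if_dist_less_1) linarith+
  with eq y show "j = j' \<and> z = z'"
    using strict_mono_eq[OF assms] unfolding stack_point_def by (auto simp: prod_eq_iff)
qed simp

definition block :: "nat \<Rightarrow> nat \<Rightarrow> (real \<times> real) set" where
  "block N b = open_rect (real b) 0 (real b + 1) (2 * real N)"

lemma is_open_rect_block: "is_open_rect (block N b)"
  unfolding block_def is_open_rect_def by blast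

lemma stack_point_mem_block:
  assumes "j < N" "fst (stack_point F j z) = real i + t" "0 < t" "t < 1"
  shows "stack_point F j z \<in> block N b \<longleftrightarrow> i = b"
proof -
  have "real j + 1 \<le> real N" using assms(1) by simp
  then have "0 < squash (snd z) + 2 * real j" "squash (snd z) + 2 * real j < 2 * real N"
    using squash_bounds[of "snd z"] by linarith+
  then have "stack_point F j z \<in> block N b \<longleftrightarrow> real b < real i + t \<and> real i + t < real b + 1"
    using assms(2) unfolding block_def by (cases "stack_point F j z") (auto simp: stack_point_def)
  also have "\<dots> \<longleftrightarrow> i = b" using assms(3,4) nat_eq_if_dist_less_1[of i b] by auto
  finally show ?thesis .
qed

lemma block_ne_stack_rect:
  assumes "j < N"
  shows "block N b \<noteq> stack_rect F j S"
proof
  assume eq: "block N b = stack_rect F j S"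
  obtain a b' c d where r: "rect_params S = (a, b', c, d)" by (cases "rect_params S")
  have "(real b + 1 / 2, 2 * real N - 1 / 2) \<in> block N b" using assms unfolding block_def by auto
  then have "2 * real N - 1 / 2 < squash d + 2 * real j" using eq unfolding stack_rect_def r by simp
  moreover have "real j + 1 \<le> real N" using assms by simp
  ultimately show False using squash_bounds[of d] by linarith
qed

lemma block_inj:
  assumes "0 < N" "block N b = block N b'"
  shows "b = b'"
proof -
  have "(real b + 1 / 2, 1 / 2) \<in> block N b" using assms(1) unfolding block_def by auto
  then have "real b' < real b + 1 / 2" "real b + 1 / 2 < real b' + 1"
    using assms(2) unfolding block_def by auto
  then show ?thesis by (intro nat_eq_if_dist_less_1) linarith+
qed

type_synonym config_vertex = "(real \<times> real) + (real \<times> real) set"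

locale stacked_copies =
  fixes P :: "(real \<times> real) set" and R :: "(real \<times> real) set set" and N :: nat
    and F :: "nat \<Rightarrow> real \<Rightarrow> real"
  assumes config: "rect_config P R"
    and mono: "\<And>j. j < N \<Longrightarrow> strict_mono (F j)"
begin

definition stacked_points :: "(real \<times> real) set" where
  "stacked_points = (\<lambda>(j, p). stack_point F j p) ` ({..<N} \<times> P)"

definition stacked_rects :: "(real \<times> real) set set" where
  "stacked_rects = (\<lambda>(j, S). stack_rect F j S) ` ({..<N} \<times> R)"

definition copy_vertex :: "nat \<times> config_vertex \<Rightarrow> config_vertex" where
  "copy_vertex x = (case x of (j, Inl p) \<Rightarrow> Inl (stack_point F j p) | (j, Inr S) \<Rightarrow> Inr (stack_rect F j S))"

lemma finite_P: "finite P" and finite_R: "finite R" and rects: "\<And>S. S \<in> R \<Longrightarrow> is_open_rect S"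
  using config unfolding rect_config_def by auto

lemma stack_point_mem_stack_rect_iff:
  "j' < N \<Longrightarrow> S \<in> R \<Longrightarrow> stack_point F j z \<in> stack_rect F j' S \<longleftrightarrow> j = j' \<and> z \<in> S"
  using stack_point_mem_stack_rect[where F = F and j' = j', OF mono rects] .

lemma stack_point_eq_iff_stacked:
  "j < N \<Longrightarrow> stack_point F j z = stack_point F j' z' \<longleftrightarrow> j = j' \<and> z = z'"
  using stack_point_eq_iff[where F = F and j = j] mono by blast

lemma stack_rect_eq_iff:
  assumes "j < N" "S \<in> R" "S' \<in> R"
  shows "stack_rect F j S = stack_rect F j S' \<longleftrightarrow> S = S'"
  using stack_rect_inj[where F = F and j = j, OF mono rects rects] assms by blast

lemma rect_config_stacked: "rect_config stacked_points stacked_rects"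
  using finite_P finite_R unfolding rect_config_def stacked_points_def stacked_rects_def
  by (auto simp: is_open_rect_stack_rect)

lemma card_stacked_points: "card stacked_points = N * card P"
proof -
  have "inj_on (\<lambda>(j, p). stack_point F j p) ({..<N} \<times> P)"
    by (auto simp: inj_on_def stack_point_eq_iff_stacked)
  then show ?thesis unfolding stacked_points_def by (simp add: card_image card_cartesian_product)
qed

lemma card_stacked_rects_le: "card stacked_rects \<le> N * card R"
  unfolding stacked_rects_def using card_image_le[of "{..<N} \<times> R"] finite_R
  by (metis card_cartesian_product card_lessThan finite_SigmaI finite_lessThan)

lemma point_degree_stacked:
  assumes "j < N" "p \<in> P"
  shows "point_degree R p \<le> point_degree stacked_rects (stack_point F j p)"
proof -
  have "inj_on (stack_rect F j) R" using stack_rect_eq_iff assms(1) by (meson inj_onI)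
  then have "point_degree R p = card (stack_rect F j ` {S\<in>R. p \<in> S})"
    unfolding point_degree_def by (auto intro: card_image[symmetric] inj_on_subset)
  also have "\<dots> \<le> point_degree stacked_rects (stack_point F j p)"
    unfolding point_degree_def using assms finite_R rect_config_stacked
    by (intro card_mono) (auto simp: stacked_rects_def stack_point_mem_stack_rect_iff rect_config_def)
  finally show ?thesis .
qed

definition copy_vertices :: "(nat \<times> config_vertex) set" where
  "copy_vertices = {(j, Inl p) | j p. j < N \<and> p \<in> P} \<union> {(j, Inr S) | j S. j < N \<and> S \<in> R \<and> S \<inter> P \<noteq> {}}"

lemma mem_copy_vertices [simp]:
  "(j, Inl p) \<in> copy_vertices \<longleftrightarrow> j < N \<and> p \<in> P"
  "(j, Inr S) \<in> copy_vertices \<longleftrightarrow> j < N \<and> S \<in> R \<and> S \<inter> P \<noteq> {}"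
  unfolding copy_vertices_def by blast+

lemma inj_on_copy_vertex: "inj_on copy_vertex copy_vertices"
proof (rule inj_onI)
  fix x y assume x: "x \<in> copy_vertices" and y: "y \<in> copy_vertices" and eq: "copy_vertex x = copy_vertex y"
  obtain j a j' a' where xy: "x = (j, a)" "y = (j', a')" by fastforce
  show "x = y"
  proof (cases a)
    case (Inl p)
    then obtain p' where a': "a' = Inl p'" using eq xy by (cases a') (simp_all add: copy_vertex_def)
    from x have "j < N" unfolding xy Inl copy_vertices_def by auto
    have "stack_point F j p = stack_point F j' p'" using eq xy Inl a' by (simp add: copy_vertex_def)
    then show ?thesis using stack_point_eq_iff_stacked[OF \<open>j < N\<close>] xy Inl a' by simp
  next
    case (Inr S)
    then obtain S' where a': "a' = Inr S'" using eq xy by (cases a') (simp_all add: copy_vertex_def)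
    then have eqS: "stack_rect F j S = stack_rect F j' S'" using eq xy Inr by (simp add: copy_vertex_def)
    from x y obtain p where jS: "j < N" "j' < N" "S \<in> R" "S' \<in> R" "p \<in> S"
      unfolding xy Inr a' copy_vertices_def by auto
    then have "stack_point F j p \<in> stack_rect F j' S'"
      using eqS stack_point_mem_stack_rect_iff[OF jS(1,3)] by simp
    then have "j = j'" using stack_point_mem_stack_rect_iff[OF jS(2,4)] by simp
    then show ?thesis using stack_rect_eq_iff[OF jS(1,3,4)] eqS xy Inr a' by simp
  qed
qed

lemma disjoint_copies_vertices:
  assumes "disjoint_copies N (incidence_adj P R) x y"
  shows "x \<in> copy_vertices \<and> y \<in> copy_vertices"
proof -
  obtain j a j' a' where xy: "x = (j, a)" "y = (j', a')" by fastforce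
  then have "j = j'" "j < N" "incidence_adj P R a a'" using assms unfolding disjoint_copies_def by auto
  then show ?thesis unfolding xy copy_vertices_def by (elim incidence_adjE) auto
qed

lemma incidence_adj_stacked:
  assumes "incidence_adj stacked_points stacked_rects u v"
  shows "graph_image copy_vertex (disjoint_copies N (incidence_adj P R)) u v"
proof -
  have edge: "graph_image copy_vertex (disjoint_copies N (incidence_adj P R)) (Inl q) (Inr S)
      \<and> graph_image copy_vertex (disjoint_copies N (incidence_adj P R)) (Inr S) (Inl q)"
    if q: "q \<in> stacked_points" and S: "S \<in> stacked_rects" and qS: "q \<in> S" for q S
  proof -
    obtain j p j' S0 where jp: "j < N" "p \<in> P" "q = stack_point F j p"
      and jS: "j' < N" "S0 \<in> R" "S = stack_rect F j' S0"
      using q S unfolding stacked_points_def stacked_rects_def by auto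
    then have "j = j'" "p \<in> S0" using qS stack_point_mem_stack_rect_iff[OF jS(1,2)] by simp_all
    then have "disjoint_copies N (incidence_adj P R) (j, Inl p) (j, Inr S0)"
      "disjoint_copies N (incidence_adj P R) (j, Inr S0) (j, Inl p)"
      using jp jS unfolding disjoint_copies_def by simp_all
    moreover have "Inl q = copy_vertex (j, Inl p)" "Inr S = copy_vertex (j, Inr S0)"
      using jp jS \<open>j = j'\<close> by (simp_all add: copy_vertex_def)
    ultimately show ?thesis unfolding graph_image_def by blast
  qed
  from assms obtain q S where qS: "q \<in> stacked_points" "S \<in> stacked_rects" "q \<in> S"
    and uv: "(u = Inl q \<and> v = Inr S) \<or> (u = Inr S \<and> v = Inl q)"
    by (rule incidence_adjE)
  from uv show ?thesis using edge[OF qS] by (elim disjE) simp_all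
qed

lemma girth_at_least_stacked:
  assumes "girth_at_least (incidence_adj P R) g"
  shows "girth_at_least (incidence_adj stacked_points stacked_rects) g"
proof -
  let ?C = "disjoint_copies N (incidence_adj P R)"
  have "{x. \<exists>y. ?C x y \<or> ?C y x} \<subseteq> copy_vertices" by (auto dest: disjoint_copies_vertices)
  then have "inj_on copy_vertex {x. \<exists>y. ?C x y \<or> ?C y x}" by (rule inj_on_subset[OF inj_on_copy_vertex])
  then have "girth_at_least (graph_image copy_vertex ?C) g"
    using girth_at_least_disjoint_copies[OF assms] by (intro girth_at_least_graph_image)
  then show ?thesis using incidence_adj_stacked by (rule girth_at_least_subgraph)
qed

end

text \<open>The fractional part of an \<open>x\<close>-coordinate in copy \<open>j\<close> records \<open>j\<close>, which keeps the
  \<open>x\<close>-coordinates of all copies distinct.\<close>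

definition copy_offset :: "nat \<Rightarrow> nat \<Rightarrow> real" where
  "copy_offset N j = (real j + 1) / (real N + 1)"

lemma copy_offset_bounds: "j < N \<Longrightarrow> 0 < copy_offset N j \<and> copy_offset N j < 1"
  unfolding copy_offset_def by (auto simp: field_simps)

lemma copy_offset_inj: "copy_offset N j = copy_offset N j' \<Longrightarrow> j = j'"
  unfolding copy_offset_def by (auto simp: field_simps)

lemma nat_plus_fraction_eq:
  fixes i i' :: nat and t t' :: real
  assumes "0 < t" "t < 1" "0 < t'" "t' < 1" "real i + t = real i' + t'"
  shows "i = i' \<and> t = t'"
proof -
  have "i = i'" using assms by (intro nat_eq_if_dist_less_1) linarith+
  then show ?thesis using assms(5) by simp
qed

text \<open>The points of copy \<open>j\<close> fall into the blocks \<open>b\<close> with \<open>(j, b) \<in> set es\<close>, one point per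
  block: \<open>h j\<close> sends the \<open>x\<close>-coordinate of a point to its block, and \<open>F j\<close> moves the point into
  that block.\<close>

locale stacked_blocks = stacked_copies +
  fixes M :: nat and es :: "(nat \<times> nat) list" and h :: "nat \<Rightarrow> real \<Rightarrow> nat"
  assumes N_pos: "0 < N" and es_sub: "set es \<subseteq> {..<N} \<times> {..<M}"
    and inj_fst: "inj_on fst P"
    and h_bij: "\<And>j. j < N \<Longrightarrow> bij_betw (h j) (fst ` P) {b. (j, b) \<in> set es}"
    and F_eq: "\<And>j p. j < N \<Longrightarrow> p \<in> P \<Longrightarrow> F j (fst p) = real (h j (fst p)) + copy_offset N j"
begin

definition blocks :: "(real \<times> real) set set" where
  "blocks = block N ` {..<M}"

lemma rect_config_stacked_blocks: "rect_config stacked_points (stacked_rects \<union> blocks)"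
  using rect_config_stacked unfolding rect_config_def blocks_def by (auto simp: is_open_rect_block)

lemma card_blocks_le: "card blocks \<le> M"
  unfolding blocks_def using card_image_le[of "{..<M}" "block N"] by simp

lemma h_in_es: "j < N \<Longrightarrow> p \<in> P \<Longrightarrow> (j, h j (fst p)) \<in> set es"
  using bij_betw_apply[OF h_bij] by blast

lemma fst_stack_point: "j < N \<Longrightarrow> p \<in> P \<Longrightarrow> fst (stack_point F j p) = real (h j (fst p)) + copy_offset N j"
  unfolding stack_point_def using F_eq by simp

lemma stack_point_mem_block_iff:
  "j < N \<Longrightarrow> p \<in> P \<Longrightarrow> stack_point F j p \<in> block N b \<longleftrightarrow> h j (fst p) = b"
  using stack_point_mem_block[OF _ fst_stack_point] copy_offset_bounds by blast

lemma inj_on_fst_stacked_points: "inj_on fst stacked_points"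
proof (rule inj_onI)
  fix q q' assume "q \<in> stacked_points" "q' \<in> stacked_points" and eq: "fst q = fst q'"
  then obtain j p j' p' where jp: "j < N" "p \<in> P" "q = stack_point F j p"
    and jp': "j' < N" "p' \<in> P" "q' = stack_point F j' p'"
    unfolding stacked_points_def by auto
  have "real (h j (fst p)) + copy_offset N j = real (h j' (fst p')) + copy_offset N j'"
    using eq jp jp' fst_stack_point by simp
  then have "h j (fst p) = h j' (fst p')" "j = j'"
    using nat_plus_fraction_eq copy_offset_bounds[OF jp(1)] copy_offset_bounds[OF jp'(1)] copy_offset_inj
    by blast+
  moreover have "inj_on (h j) (fst ` P)" using h_bij[OF jp(1)] by (rule bij_betw_imp_inj_on)
  ultimately have "p = p'" using jp(2) jp'(2) inj_fst by (auto simp: inj_on_def)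
  then show "q = q'" using jp jp' \<open>j = j'\<close> by simp
qed

lemma point_degree_stacked_blocks:
  assumes "j < N" "p \<in> P"
  shows "Suc (point_degree R p) \<le> point_degree (stacked_rects \<union> blocks) (stack_point F j p)"
proof -
  let ?S = "block N (h j (fst p))"
  have "?S \<in> blocks" using h_in_es[OF assms] es_sub unfolding blocks_def by auto
  moreover have "?S \<notin> stacked_rects" using block_ne_stack_rect unfolding stacked_rects_def by fastforce
  moreover have "stack_point F j p \<in> ?S" using stack_point_mem_block_iff[OF assms] by simp
  ultimately have sub: "insert ?S {S\<in>stacked_rects. stack_point F j p \<in> S}
      \<subseteq> {S\<in>stacked_rects \<union> blocks. stack_point F j p \<in> S}"
    and new: "?S \<notin> {S\<in>stacked_rects. stack_point F j p \<in> S}"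
    by auto
  have fin: "finite (stacked_rects \<union> blocks)"
    using rect_config_stacked_blocks unfolding rect_config_def by blast
  have "Suc (point_degree stacked_rects (stack_point F j p))
      = card (insert ?S {S\<in>stacked_rects. stack_point F j p \<in> S})"
    unfolding point_degree_def using new fin by simp
  also have "\<dots> \<le> point_degree (stacked_rects \<union> blocks) (stack_point F j p)"
    unfolding point_degree_def using sub fin by (intro card_mono) auto
  finally show ?thesis using point_degree_stacked[OF assms] by linarith
qed

definition attached_point :: "nat \<Rightarrow> nat \<Rightarrow> real \<times> real" where
  "attached_point j b = inv_into P (\<lambda>p. h j (fst p)) b"

lemma bij_betw_h_fst: "j < N \<Longrightarrow> bij_betw (\<lambda>p. h j (fst p)) P {b. (j, b) \<in> set es}"
  using bij_betw_trans[OF inj_on_imp_bij_betw[OF inj_fst] h_bij] by (simp add: comp_def)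

lemma attached_point_mem:
  assumes "(j, b) \<in> set es"
  shows "attached_point j b \<in> P" "h j (fst (attached_point j b)) = b"
proof -
  have "j < N" using assms es_sub by auto
  then have "b \<in> (\<lambda>p. h j (fst p)) ` P" using assms bij_betw_h_fst by (simp add: bij_betw_def)
  then show "attached_point j b \<in> P" "h j (fst (attached_point j b)) = b"
    unfolding attached_point_def by (rule inv_into_into, rule f_inv_into_f)
qed

lemma attached_point_h:
  assumes "j < N" "p \<in> P"
  shows "attached_point j (h j (fst p)) = p"
  using inv_into_f_f[OF bij_betw_imp_inj_on[OF bij_betw_h_fst[OF assms(1)]] assms(2)]
  unfolding attached_point_def by simp

definition attach_edge :: "nat \<times> nat \<Rightarrow> ((nat \<times> config_vertex) + nat) \<times> ((nat \<times> config_vertex) + nat)" where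
  "attach_edge e = (Inl (fst e, Inl (attached_point (fst e) (snd e))), Inr (snd e))"

definition block_graph :: "(nat \<times> config_vertex) + nat \<Rightarrow> (nat \<times> config_vertex) + nat \<Rightarrow> bool" where
  "block_graph = add_edges (graph_image Inl (disjoint_copies N (incidence_adj P R))) (map attach_edge es)"

lemma girth_at_least_block_graph:
  assumes girth: "girth_at_least (incidence_adj P R) g"
    and far: "far_edge_list (g - 1) (bipartite_edges es)"
  shows "girth_at_least block_graph g"
  unfolding block_graph_def
proof (rule girth_at_least_add_far_edges)
  let ?\<phi> = "case_sum (\<lambda>x. Inl (fst x)) Inr :: _ \<Rightarrow> nat + nat"
  show "girth_at_least (graph_image Inl (disjoint_copies N (incidence_adj P R))) g"
    using girth_at_least_disjoint_copies[OF girth] by (rule girth_at_least_graph_image) simp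
  show "graph_image Inl (disjoint_copies N (incidence_adj P R)) b a"
    if "graph_image Inl (disjoint_copies N (incidence_adj P R)) a b" for a b
    using that incidence_adj_sym unfolding graph_image_def disjoint_copies_def by metis
  show "?\<phi> a = ?\<phi> b" if "graph_image Inl (disjoint_copies N (incidence_adj P R)) a b" for a b
    using that unfolding graph_image_def disjoint_copies_def by auto
  have "map (map_prod ?\<phi> ?\<phi>) (map attach_edge es) = bipartite_edges es"
    unfolding bipartite_edges_def attach_edge_def by (auto simp: case_prod_beta)
  then show "far_edge_list (g - 1) (map (map_prod ?\<phi> ?\<phi>) (map attach_edge es))"
    using far by simp
qed

definition block_vertex :: "(nat \<times> config_vertex) + nat \<Rightarrow> config_vertex" where
  "block_vertex = case_sum copy_vertex (\<lambda>b. Inr (block N b))"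

lemma copy_edge_block_graph:
  assumes "graph_image copy_vertex (disjoint_copies N (incidence_adj P R)) u v"
  shows "graph_image block_vertex block_graph u v"
proof -
  obtain a b where ab: "u = copy_vertex a" "v = copy_vertex b" "disjoint_copies N (incidence_adj P R) a b"
    using assms unfolding graph_image_def by blast
  then have "block_graph (Inl a) (Inl b)"
    unfolding block_graph_def add_edges_def graph_image_def by blast
  then show ?thesis unfolding graph_image_def block_vertex_def using ab
    by (intro exI[of _ "Inl a"] exI[of _ "Inl b"]) simp
qed

lemma incidence_adj_stacked_blocks:
  assumes "incidence_adj stacked_points (stacked_rects \<union> blocks) u v"
  shows "graph_image block_vertex block_graph u v"
proof -
  have edge: "graph_image block_vertex block_graph (Inl q) (Inr S)
      \<and> graph_image block_vertex block_graph (Inr S) (Inl q)"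
    if q: "q \<in> stacked_points" and S: "S \<in> stacked_rects \<union> blocks" and qS: "q \<in> S" for q S
  proof (cases "S \<in> stacked_rects")
    case True
    then have "incidence_adj stacked_points stacked_rects (Inl q) (Inr S)"
      "incidence_adj stacked_points stacked_rects (Inr S) (Inl q)"
      using q qS by simp_all
    then show ?thesis using incidence_adj_stacked copy_edge_block_graph by blast
  next
    case False
    then obtain b where b: "b < M" "S = block N b" using S unfolding blocks_def by auto
    obtain j p where jp: "j < N" "p \<in> P" "q = stack_point F j p"
      using q unfolding stacked_points_def by auto
    then have "h j (fst p) = b" using qS b stack_point_mem_block_iff by simp
    then have "(j, b) \<in> set es" "attach_edge (j, b) = (Inl (j, Inl p), Inr b)"
      using h_in_es[OF jp(1,2)] attached_point_h[OF jp(1,2)] unfolding attach_edge_def by auto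
    then have "(Inl (j, Inl p), Inr b) \<in> set (map attach_edge es)"
      unfolding set_map by (metis image_eqI)
    then have "block_graph (Inl (j, Inl p)) (Inr b)" "block_graph (Inr b) (Inl (j, Inl p))"
      unfolding block_graph_def add_edges_def graph_of_edges_def by auto
    moreover have "Inl q = block_vertex (Inl (j, Inl p))" "Inr S = block_vertex (Inr b)"
      using jp b unfolding block_vertex_def copy_vertex_def by simp_all
    ultimately show ?thesis unfolding graph_image_def by blast
  qed
  from assms obtain q S where qS: "q \<in> stacked_points" "S \<in> stacked_rects \<union> blocks" "q \<in> S"
    and uv: "(u = Inl q \<and> v = Inr S) \<or> (u = Inr S \<and> v = Inl q)"
    by (rule incidence_adjE)
  from uv show ?thesis using edge[OF qS] by (elim disjE) simp_all
qed

lemma block_graph_vertices: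
  assumes "block_graph x y"
  shows "x \<in> Inl ` copy_vertices \<union> Inr ` {..<M} \<and> y \<in> Inl ` copy_vertices \<union> Inr ` {..<M}"
proof -
  consider "graph_image Inl (disjoint_copies N (incidence_adj P R)) x y"
    | e where "e \<in> set es" "attach_edge e = (x, y) \<or> attach_edge e = (y, x)"
    using assms unfolding block_graph_def add_edges_def graph_of_edges_def set_map image_iff by metis
  then show ?thesis
  proof cases
    case 1
    then show ?thesis using disjoint_copies_vertices unfolding graph_image_def by blast
  next
    case (2 e)
    obtain j b where jb: "e = (j, b)" by fastforce
    then have "(j, Inl (attached_point j b)) \<in> copy_vertices" "b < M"
      using 2(1) es_sub attached_point_mem(1) by auto
    then show ?thesis using 2(2) unfolding jb attach_edge_def by auto
  qed
qed

lemma inj_on_block_vertex: "inj_on block_vertex (Inl ` copy_vertices \<union> Inr ` {..<M})"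
proof -
  have "copy_vertex x \<noteq> Inr (block N b)" if "x \<in> copy_vertices" for x b
  proof -
    obtain j a where x: "x = (j, a)" by fastforce
    then have "j < N" using that by (cases a) auto
    then show ?thesis using block_ne_stack_rect[of j N b F] unfolding x copy_vertex_def
      by (cases a) auto
  qed
  note ne = this
  show ?thesis
  proof (rule inj_onI)
    fix x y assume x: "x \<in> Inl ` copy_vertices \<union> Inr ` {..<M}" and y: "y \<in> Inl ` copy_vertices \<union> Inr ` {..<M}"
      and eq: "block_vertex x = block_vertex y"
    from x y consider (ll) a a' where "x = Inl a" "y = Inl a'" "a \<in> copy_vertices" "a' \<in> copy_vertices"
      | (lr) a b where "x = Inl a" "y = Inr b" "a \<in> copy_vertices"
      | (rl) a b where "x = Inr b" "y = Inl a" "a \<in> copy_vertices"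
      | (rr) b b' where "x = Inr b" "y = Inr b'"
      by blast
    then show "x = y"
    proof cases
      case ll
      then show ?thesis using eq inj_on_copy_vertex by (simp add: block_vertex_def inj_on_eq_iff)
    next
      case lr
      then show ?thesis using eq ne by (simp add: block_vertex_def)
    next
      case rl
      then show ?thesis using eq ne[of a b] by (simp add: block_vertex_def)
    next
      case rr
      then show ?thesis using eq block_inj[OF N_pos] by (simp add: block_vertex_def)
    qed
  qed
qed

lemma girth_at_least_stacked_blocks:
  assumes "girth_at_least (incidence_adj P R) g" "far_edge_list (g - 1) (bipartite_edges es)"
  shows "girth_at_least (incidence_adj stacked_points (stacked_rects \<union> blocks)) g"
proof -
  have "{x. \<exists>y. block_graph x y \<or> block_graph y x} \<subseteq> Inl ` copy_vertices \<union> Inr ` {..<M}"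
    by (auto dest: block_graph_vertices)
  then have "inj_on block_vertex {x. \<exists>y. block_graph x y \<or> block_graph y x}"
    by (rule inj_on_subset[OF inj_on_block_vertex])
  then have "girth_at_least (graph_image block_vertex block_graph) g"
    using girth_at_least_block_graph[OF assms] by (intro girth_at_least_graph_image)
  then show ?thesis using incidence_adj_stacked_blocks by (rule girth_at_least_subgraph)
qed

end

lemma exists_stacked_block_config:
  assumes config: "rect_config P R" and inj: "inj_on fst P"
    and girth: "girth_at_least (incidence_adj P R) g" and "3 \<le> g"
    and deg: "\<forall>p\<in>P. \<delta> \<le> point_degree R p" and "1 \<le> k" "0 < N"
    and room: "N * card P + k * ((g - 1) * (card P + k) ^ (g - 1)) < k * M"
  shows "\<exists>P' R'. rect_config P' R' \<and> inj_on fst P' \<and> card P' = N * card P \<and>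
    card R' \<le> N * card R + M \<and> girth_at_least (incidence_adj P' R') g \<and>
    (\<forall>p\<in>P'. Suc \<delta> \<le> point_degree R' p)"
proof -
  have "2 \<le> g - 1" using \<open>3 \<le> g\<close> by simp
  obtain es where es: "set es \<subseteq> {..<N} \<times> {..<M}" "\<forall>j<N. card {b. (j, b) \<in> set es} = card P"
    "far_edge_list (g - 1) (bipartite_edges es)"
    using exists_far_bipartite_edge_list[OF \<open>1 \<le> k\<close> \<open>2 \<le> g - 1\<close> room] by blast
  have fin: "finite P" using config unfolding rect_config_def by blast
  have "\<forall>j<N. \<exists>hj. bij_betw hj (fst ` P) {b. (j, b) \<in> set es} \<and> strict_mono_on (fst ` P) hj"
    using es(2) fin card_image[OF inj] finite_row by (metis finite_imageI ex_bij_betw_strict_mono_on)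
  then obtain h where h: "\<And>j. j < N \<Longrightarrow>
      bij_betw (h j) (fst ` P) {b. (j, b) \<in> set es} \<and> strict_mono_on (fst ` P) (h j)"
    by metis
  have "\<forall>j<N. \<exists>f. strict_mono f \<and> (\<forall>x\<in>fst ` P. f x = real (h j x) + copy_offset N j)"
  proof (intro allI impI strict_mono_extend)
    fix j assume "j < N"
    show "finite (fst ` P)" using fin by simp
    show "strict_mono_on (fst ` P) (\<lambda>x. real (h j x) + copy_offset N j)"
      using h[OF \<open>j < N\<close>] by (auto simp: strict_mono_on_def)
  qed
  then obtain F where F: "\<And>j. j < N \<Longrightarrow> strict_mono (F j)"
    "\<And>j x. j < N \<Longrightarrow> x \<in> fst ` P \<Longrightarrow> F j x = real (h j x) + copy_offset N j"
    by metis
  interpret stacked_blocks P R N F M es h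
    using config F h es(1) \<open>0 < N\<close> inj by unfold_locales auto
  have "card (stacked_rects \<union> blocks) \<le> N * card R + M"
    using card_Un_le[of stacked_rects blocks] card_stacked_rects_le card_blocks_le by linarith
  moreover have "\<forall>p\<in>stacked_points. Suc \<delta> \<le> point_degree (stacked_rects \<union> blocks) p"
    using point_degree_stacked_blocks deg unfolding stacked_points_def by fastforce
  ultimately show ?thesis
    using rect_config_stacked_blocks inj_on_fst_stacked_points card_stacked_points
      girth_at_least_stacked_blocks[OF girth es(3)] by blast
qed

lemma exists_disjoint_copies_config:
  assumes config: "rect_config P R" and girth: "girth_at_least (incidence_adj P R) g"
    and deg: "\<forall>p\<in>P. \<delta> \<le> point_degree R p"
  shows "\<exists>P' R'. rect_config P' R' \<and> card P' = N * card P \<and> card R' \<le> N * card R \<and>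
    girth_at_least (incidence_adj P' R') g \<and> (\<forall>p\<in>P'. \<delta> \<le> point_degree R' p)"
proof -
  interpret stacked_copies P R N "\<lambda>_ x. x"
    using config by unfold_locales (auto intro: strict_monoI)
  have "\<forall>p\<in>stacked_points. \<delta> \<le> point_degree stacked_rects p"
    using point_degree_stacked deg unfolding stacked_points_def by fastforce
  then show ?thesis
    using rect_config_stacked card_stacked_points card_stacked_rects_le girth_at_least_stacked[OF girth]
    by blast
qed

section \<open>Padding\<close>

lemma exists_fst_bound:
  assumes "rect_config P R"
  shows "\<exists>B. \<forall>z\<in>P \<union> \<Union>R. fst z < B"
proof -
  have "bounded (P \<union> \<Union>R)" using assms bounded_open_rect unfolding rect_config_def by auto
  then obtain B where B: "\<forall>z\<in>P \<union> \<Union>R. norm z \<le> B" unfolding bounded_iff by blast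
  have "fst z < B + 1" if "z \<in> P \<union> \<Union>R" for z
  proof -
    have "fst z \<le> norm (fst z)" by simp
    also have "\<dots> \<le> norm z" using norm_fst_le[of "fst z" "snd z"] by simp
    also have "\<dots> \<le> B" using B that by blast
    finally show ?thesis by simp
  qed
  then show ?thesis by blast
qed

definition pad_point :: "real \<Rightarrow> nat \<Rightarrow> real \<times> real" where
  "pad_point B i = (B + 2 * real i, 0)"

definition pad_rect :: "real \<Rightarrow> nat \<Rightarrow> (real \<times> real) set" where
  "pad_rect B i = open_rect (B + 2 * real i + 1) 0 (B + 2 * real i + 2) 1"

lemma center_mem_pad_rect: "(B + 2 * real i + 3 / 2, 1 / 2) \<in> pad_rect B i"
  unfolding pad_rect_def by simp

lemma fst_gt_if_mem_pad_rect: "z \<in> pad_rect B i \<Longrightarrow> B < fst z"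
  unfolding pad_rect_def open_rect_def by auto

lemma pad_point_notin_pad_rect: "pad_point B i' \<notin> pad_rect B i"
proof
  assume "pad_point B i' \<in> pad_rect B i"
  then have "real i < real i'" "real i' < real i + 1" unfolding pad_point_def pad_rect_def by simp_all
  moreover from this have "i' = i" by (intro nat_eq_if_dist_less_1) linarith+
  ultimately show False by simp
qed

lemma inj_pad_point: "inj (pad_point B)"
  unfolding pad_point_def by (rule injI) simp

lemma inj_pad_rect: "inj (pad_rect B)"
proof (rule injI)
  fix i i' assume "pad_rect B i = pad_rect B i'"
  then have "(B + 2 * real i + 3 / 2, 1 / 2) \<in> pad_rect B i'" using center_mem_pad_rect by metis
  then have "2 * real i' + 1 < 2 * real i + 3 / 2" "2 * real i + 3 / 2 < 2 * real i' + 2"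
    unfolding pad_rect_def by simp_all
  then show "i = i'" by (intro nat_eq_if_dist_less_1) linarith+
qed

lemma pad_incidence_old:
  assumes B: "\<And>z. z \<in> P \<union> \<Union>R \<Longrightarrow> fst z < B"
    and q: "q \<in> P \<union> pad_point B ` I" and S: "S \<in> R \<union> pad_rect B ` J" and qS: "q \<in> S"
  shows "q \<in> P \<and> S \<in> R"
proof (cases "S \<in> R")
  case True
  then have "fst q < B" using B qS by blast
  then show ?thesis using q True unfolding pad_point_def by auto
next
  case False
  then obtain i where Si: "S = pad_rect B i" using S by auto
  then have "q \<notin> P" using B[of q] fst_gt_if_mem_pad_rect qS by fastforce
  moreover have "q \<notin> pad_point B ` I" using Si qS pad_point_notin_pad_rect by blast
  ultimately show ?thesis using q by blast
qed

lemma exists_padded_config: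
  assumes config: "rect_config P R" and "card P \<le> n" "card R \<le> n"
  shows "\<exists>P' R'. rect_config P' R' \<and> card P' = n \<and> card R' = n \<and>
    (\<forall>u v. incidence_adj P' R' u v \<longrightarrow> incidence_adj P R u v) \<and> incidence_edges P R \<le> incidence_edges P' R'"
proof -
  have fin: "finite P" "finite R" and rects: "\<forall>S\<in>R. is_open_rect S"
    using config unfolding rect_config_def by auto
  obtain B where B: "\<And>z. z \<in> P \<union> \<Union>R \<Longrightarrow> fst z < B" using exists_fst_bound[OF config] by blast
  define Q where "Q = pad_point B ` {..<n - card P}"
  define T where "T = pad_rect B ` {..<n - card R}"
  have "P \<inter> Q = {}" using B unfolding Q_def pad_point_def by force
  moreover have "R \<inter> T = {}" using B center_mem_pad_rect fst_gt_if_mem_pad_rect unfolding T_def by fastforce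
  ultimately have card: "card (P \<union> Q) = n" "card (R \<union> T) = n"
    using fin assms(2,3) unfolding Q_def T_def
    by (simp_all add: card_Un_disjoint card_image inj_on_subset[OF inj_pad_point]
        inj_on_subset[OF inj_pad_rect])
  have "rect_config (P \<union> Q) (R \<union> T)"
    using fin rects unfolding rect_config_def Q_def T_def pad_rect_def is_open_rect_def by auto
  moreover have "incidence_adj P R u v" if adj: "incidence_adj (P \<union> Q) (R \<union> T) u v" for u v
  proof -
    obtain q S where qS: "q \<in> P \<union> Q" "S \<in> R \<union> T" "q \<in> S"
      and uv: "(u = Inl q \<and> v = Inr S) \<or> (u = Inr S \<and> v = Inl q)"
      using adj by (rule incidence_adjE)
    have "q \<in> P \<and> S \<in> R" by (rule pad_incidence_old[OF B qS[unfolded Q_def T_def]])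
    then show ?thesis using uv qS(3) by auto
  qed
  moreover have "incidence_edges P R \<le> incidence_edges (P \<union> Q) (R \<union> T)"
    unfolding incidence_edges_def
    using fin \<open>rect_config (P \<union> Q) (R \<union> T)\<close> unfolding rect_config_def
    by (intro card_mono) (auto intro: finite_subset[of _ "(P \<union> Q) \<times> (R \<union> T)"])
  ultimately show ?thesis using card by blast
qed

section \<open>The iteration\<close>

lemma girth_at_least_few_vertices:
  assumes "finite V" "card V < 3" "\<And>u v. E u v \<Longrightarrow> u \<in> V"
  shows "girth_at_least E g"
  unfolding girth_at_least_def has_cycle_of_length_def
proof (intro allI impI, elim conjE exE)
  fix k vs assume "3 \<le> k" "length vs = k" "distinct vs" and adj: "\<forall>i<k. E (vs ! i) (vs ! ((i + 1) mod k))"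
  have "set vs \<subseteq> V"
  proof
    fix x assume "x \<in> set vs"
    then obtain i where "i < k" "x = vs ! i" using \<open>length vs = k\<close> by (auto simp: in_set_conv_nth)
    then show "x \<in> V" using adj assms(3) by blast
  qed
  then have "k \<le> card V" using \<open>distinct vs\<close> \<open>length vs = k\<close> assms(1) distinct_card card_mono by metis
  then show "g \<le> k" using \<open>3 \<le> k\<close> assms(2) by linarith
qed

text \<open>With \<open>k = 2 ^ (d + 3)\<close> and \<open>X = (g - 1) (m + k) ^ (g - 1)\<close>, level \<open>d + 1\<close> uses \<open>k X\<close>
  copies and \<open>2 m X + 1\<close> blocks of degree at most \<open>k\<close>: enough blocks for the greedy
  construction, and few enough that there stay fewer than \<open>(2 - 1 / 2 ^ (d + 1))\<close> times as many
  rectangles as points.\<close>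

definition level_copies :: "nat \<Rightarrow> nat \<Rightarrow> nat \<Rightarrow> nat" where
  "level_copies g d m = 2 ^ (d + 3) * ((g - 1) * (m + 2 ^ (d + 3)) ^ (g - 1))"

fun level_size :: "nat \<Rightarrow> nat \<Rightarrow> nat" where
  "level_size g 0 = 1"
| "level_size g (Suc d) = level_copies g d (level_size g d) * level_size g d"

lemma level_size_pos: "2 \<le> g \<Longrightarrow> 0 < level_size g d"
  by (induction d) (auto simp: level_copies_def)

lemma level_size_ge: "2 \<le> g \<Longrightarrow> 2 ^ d \<le> level_size g d"
proof (induction d)
  case (Suc d)
  have "1 \<le> (2::nat) ^ (d + 3)" by simp
  then have "1 \<le> (level_size g d + 2 ^ (d + 3)) ^ (g - 1)" by (intro one_le_power) linarith
  moreover have "1 \<le> g - 1" using Suc.prems by simp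
  ultimately have "1 * 1 \<le> (g - 1) * (level_size g d + 2 ^ (d + 3)) ^ (g - 1)"
    by (intro mult_mono) auto
  moreover have "2 \<le> (2::nat) ^ (d + 3)" by (simp add: power_add)
  ultimately have "2 * 1 \<le> level_copies g d (level_size g d)"
    unfolding level_copies_def by (intro mult_mono) auto
  then have "2 * 2 ^ d \<le> level_copies g d (level_size g d) * level_size g d"
    using Suc by (intro mult_mono) auto
  then show ?case by simp
qed simp

lemma level_rects_bound:
  fixes m X r d :: nat
  assumes "1 \<le> m" "1 \<le> X" "real r \<le> (2 - 1 / 2 ^ d) * real m"
  shows "real (2 ^ (d + 3) * X * r + (2 * m * X + 1)) \<le> (2 - 1 / 2 ^ Suc d) * real (2 ^ (d + 3) * X * m)"
proof -
  define t :: real where "t = 2 ^ d"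
  have t: "1 \<le> t" "real (2 ^ (d + 3)) = 8 * t" unfolding t_def by (simp_all add: power_add)
  have "1 \<le> real X" "1 \<le> real m" using assms(1,2) by simp_all
  then have "1 * 1 \<le> real X * real m" by (intro mult_mono) auto
  have "real (2 ^ (d + 3) * X * r + (2 * m * X + 1)) = 8 * t * real X * real r + 2 * real m * real X + 1"
    using t(2) by simp
  also have "\<dots> \<le> 8 * t * real X * ((2 - 1 / t) * real m) + 2 * real m * real X + 1"
    using assms(3) t(1) unfolding t_def by (intro add_right_mono mult_left_mono) auto
  also have "\<dots> = 16 * t * real X * real m - 6 * real X * real m + 1"
    using t(1) by (simp add: field_simps)
  also have "\<dots> \<le> (2 - 1 / (2 * t)) * (8 * t * real X * real m)"
    using t(1) \<open>1 * 1 \<le> real X * real m\<close> by (simp add: field_simps)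
  also have "\<dots> = (2 - 1 / 2 ^ Suc d) * real (2 ^ (d + 3) * X * m)"
    using t(2) unfolding t_def by simp
  finally show ?thesis .
qed

definition level_config :: "nat \<Rightarrow> nat \<Rightarrow> (real \<times> real) set \<Rightarrow> (real \<times> real) set set \<Rightarrow> bool" where
  "level_config g d P R \<longleftrightarrow> rect_config P R \<and> inj_on fst P \<and> card P = level_size g d \<and>
     real (card R) \<le> (2 - 1 / 2 ^ d) * real (card P) \<and> girth_at_least (incidence_adj P R) g \<and>
     (\<forall>p\<in>P. Suc d \<le> point_degree R p)"

lemma level_config_0: "\<exists>P R. level_config g 0 P R"
proof -
  let ?P = "{(0::real, 0::real)}" and ?R = "{open_rect (-1) (-1) 1 1}"
  have "rect_config ?P ?R" unfolding rect_config_def is_open_rect_def by blast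
  moreover have "girth_at_least (incidence_adj ?P ?R) g"
    by (rule girth_at_least_few_vertices[of "{Inl (0, 0), Inr (open_rect (-1) (-1) 1 1)}"])
      (auto simp: card_insert_if incidence_adj_def)
  moreover have "{S\<in>?R. (0, 0) \<in> S} = ?R" by auto
  then have "point_degree ?R (0, 0) = 1" unfolding point_degree_def by simp
  ultimately show ?thesis unfolding level_config_def by (intro exI[of _ ?P] exI[of _ ?R]) auto
qed

lemma level_config_Suc:
  assumes "3 \<le> g" "level_config g d P R"
  shows "\<exists>P' R'. level_config g (Suc d) P' R'"
proof -
  from assms(2) have config: "rect_config P R" and inj: "inj_on fst P"
    and card_P: "card P = level_size g d" and card_R: "real (card R) \<le> (2 - 1 / 2 ^ d) * real (card P)"
    and girth: "girth_at_least (incidence_adj P R) g" and deg: "\<forall>p\<in>P. Suc d \<le> point_degree R p"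
    unfolding level_config_def by blast+
  define m where "m = card P"
  define k :: nat where "k = 2 ^ (d + 3)"
  define X where "X = (g - 1) * (m + k) ^ (g - 1)"
  define M where "M = 2 * m * X + 1"
  have "1 \<le> m" using level_size_pos[of g d] assms(1) card_P unfolding m_def by simp
  have "1 \<le> k" unfolding k_def by simp
  then have "1 \<le> (m + k) ^ (g - 1)" by (intro one_le_power) linarith
  then have "1 * 1 \<le> X" unfolding X_def using assms(1) by (intro mult_mono) auto
  then have "1 \<le> X" by simp
  have "k * X * m + k * X \<le> k * X * m + k * X * m" using \<open>1 \<le> m\<close> by simp
  also have "\<dots> < k * M" using \<open>1 \<le> k\<close> unfolding M_def by (simp add: algebra_simps)
  finally have room: "k * X * card P + k * ((g - 1) * (card P + k) ^ (g - 1)) < k * M"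
    unfolding m_def X_def .
  have "0 < k * X" using \<open>1 \<le> k\<close> \<open>1 \<le> X\<close> by simp
  obtain P' R' where "rect_config P' R'" "inj_on fst P'" and card_P': "card P' = k * X * m"
    and card_R': "card R' \<le> k * X * card R + M" and "girth_at_least (incidence_adj P' R') g"
    and "\<forall>p\<in>P'. Suc (Suc d) \<le> point_degree R' p"
    using exists_stacked_block_config[OF config inj girth assms(1) deg \<open>1 \<le> k\<close> \<open>0 < k * X\<close> room]
    unfolding m_def by blast
  moreover have "card P' = level_size g (Suc d)"
    using card_P' card_P unfolding m_def k_def X_def by (simp add: level_copies_def)
  moreover have "real (card R') \<le> (2 - 1 / 2 ^ Suc d) * real (card P')"
  proof -
    have "real (card R') \<le> real (k * X * card R + M)" using card_R' by (simp only: of_nat_le_iff)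
    also have "\<dots> \<le> (2 - 1 / 2 ^ Suc d) * real (k * X * m)"
      using level_rects_bound[OF \<open>1 \<le> m\<close> \<open>1 \<le> X\<close> card_R[folded m_def]] unfolding k_def M_def .
    finally show ?thesis using card_P' by simp
  qed
  ultimately show ?thesis unfolding level_config_def by blast
qed

lemma exists_level_config: "3 \<le> g \<Longrightarrow> \<exists>P R. level_config g d P R"
  by (induction d) (use level_config_0 level_config_Suc in blast)+

lemma mult_div_bounds:
  fixes a n :: nat
  assumes "0 < a" "a \<le> n"
  shows "n div a * a \<le> n" "n < 2 * (n div a * a)"
proof -
  have "n = n div a * a + n mod a" by simp
  moreover have "n mod a < a" using assms(1) by simp
  moreover have "a \<le> n div a * a" using assms by (simp add: div_greater_zero_iff Suc_le_eq)
  ultimately show "n div a * a \<le> n" "n < 2 * (n div a * a)" by linarith+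
qed

lemma incidence_edges_ge:
  assumes "rect_config P R" "\<forall>p\<in>P. \<delta> \<le> point_degree R p"
  shows "\<delta> * card P \<le> incidence_edges P R"
proof -
  have "\<delta> * card P = (\<Sum>p\<in>P. \<delta>)" by simp
  also have "\<dots> \<le> (\<Sum>p\<in>P. point_degree R p)" using assms(2) by (intro sum_mono) auto
  also have "\<dots> = incidence_edges P R"
    using assms(1) incidence_edges_eq_sum_point_degree unfolding rect_config_def by simp
  finally show ?thesis .
qed

lemma exists_config_of_size:
  assumes "3 \<le> g" "2 * level_size g d \<le> n"
  shows "\<exists>P R. rect_config P R \<and> card P = n \<and> card R = n \<and> girth_at_least (incidence_adj P R) g \<and>
    real (Suc d) * real n \<le> 4 * real (incidence_edges P R)"
proof -
  obtain P0 R0 where "level_config g d P0 R0" using exists_level_config[OF assms(1)] by blast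
  then have config0: "rect_config P0 R0" and card_P0: "card P0 = level_size g d"
    and card_R0: "real (card R0) \<le> (2 - 1 / 2 ^ d) * real (card P0)"
    and girth0: "girth_at_least (incidence_adj P0 R0) g" and deg0: "\<forall>p\<in>P0. Suc d \<le> point_degree R0 p"
    unfolding level_config_def by blast+
  define m where "m = card P0"
  define N where "N = n div (2 * m)"
  have "0 < m" using level_size_pos[of g d] assms(1) card_P0 unfolding m_def by simp
  have "(2 - 1 / 2 ^ d) * real m \<le> 2 * real m" by (rule mult_right_mono) simp_all
  then have "card R0 \<le> 2 * m" using card_R0 unfolding m_def by linarith
  have "N * (2 * m) \<le> n" "n < 4 * (N * m)"
    using mult_div_bounds[of "2 * m" n] \<open>0 < m\<close> assms(2) card_P0 unfolding N_def m_def by simp_all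
  obtain P1 R1 where config1: "rect_config P1 R1" and card_P1: "card P1 = N * m"
    and card_R1: "card R1 \<le> N * card R0" and girth1: "girth_at_least (incidence_adj P1 R1) g"
    and deg1: "\<forall>p\<in>P1. Suc d \<le> point_degree R1 p"
    using exists_disjoint_copies_config[OF config0 girth0 deg0, of N] unfolding m_def by blast
  have "N * m \<le> N * (2 * m)" "N * card R0 \<le> N * (2 * m)" using \<open>card R0 \<le> 2 * m\<close> by simp_all
  then have "card P1 \<le> n" "card R1 \<le> n" using card_P1 card_R1 \<open>N * (2 * m) \<le> n\<close> by linarith+
  then obtain P R where config: "rect_config P R" "card P = n" "card R = n"
    and sub: "\<forall>u v. incidence_adj P R u v \<longrightarrow> incidence_adj P1 R1 u v"
    and edges: "incidence_edges P1 R1 \<le> incidence_edges P R"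
    using exists_padded_config[OF config1] by blast
  have "Suc d * n \<le> Suc d * (4 * (N * m))" using \<open>n < 4 * (N * m)\<close> by (intro mult_le_mono2) simp
  also have "\<dots> = 4 * (Suc d * card P1)" using card_P1 by simp
  also have "\<dots> \<le> 4 * incidence_edges P R" using incidence_edges_ge[OF config1 deg1] edges by simp
  finally have "real (Suc d) * real n \<le> 4 * real (incidence_edges P R)"
    by (metis of_nat_le_iff of_nat_mult of_nat_numeral)
  moreover have "girth_at_least (incidence_adj P R) g" using girth1 sub by (blast intro: girth_at_least_subgraph)
  ultimately show ?thesis using config by blast
qed

lemma exists_level_bracket:
  assumes "2 \<le> g" "2 \<le> n"
  shows "\<exists>d. 2 * level_size g d \<le> n \<and> n < 2 * level_size g (Suc d)"
proof -
  have "n < 2 ^ Suc n" by (induction n) auto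
  also have "\<dots> \<le> 2 * level_size g (Suc n)" using level_size_ge[OF assms(1), of "Suc n"] by linarith
  finally have ex: "\<exists>d. n < 2 * level_size g (Suc d)" by blast
  define d where "d = (LEAST d. n < 2 * level_size g (Suc d))"
  have "n < 2 * level_size g (Suc d)" unfolding d_def by (rule LeastI_ex[OF ex])
  moreover have "2 * level_size g d \<le> n"
  proof (cases d)
    case 0
    then show ?thesis using assms(2) by simp
  next
    case (Suc d')
    then have "\<not> n < 2 * level_size g (Suc d')" unfolding d_def by (metis lessI not_less_Least)
    then show ?thesis using Suc by simp
  qed
  ultimately show ?thesis by blast
qed

lemma level_size_le:
  assumes "3 \<le> g"
  shows "level_size g d \<le> 2 ^ 2 ^ ((g + 2) * (d + 1))"
proof (induction d)
  case 0
  show ?case by simp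
next
  case (Suc d)
  define G where "G = g - 1"
  define X where "X = (g + 2) * (d + 1)"
  define U :: nat where "U = 2 ^ 2 ^ X"
  define m where "m = level_size g d"
  have "m \<le> U" using Suc.IH unfolding m_def U_def X_def .
  have "d + 3 \<le> X" "G \<le> X" using assms unfolding X_def G_def by (simp_all add: algebra_simps)
  then have "d + 3 \<le> 2 ^ X" "G \<le> 2 ^ X" using less_exp[of X] by linarith+
  then have "2 ^ (d + 3) \<le> U" "G \<le> U" unfolding U_def using less_exp[of "2 ^ X"]
    by (simp add: power_increasing, linarith)
  have "level_size g (Suc d) = 2 ^ (d + 3) * (G * (m + 2 ^ (d + 3)) ^ G) * m"
    unfolding m_def G_def by (simp add: level_copies_def)
  also have "\<dots> \<le> U * ((2 * U) * (2 * U) ^ G) * U"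
    using \<open>m \<le> U\<close> \<open>2 ^ (d + 3) \<le> U\<close> \<open>G \<le> U\<close>
    by (intro mult_mono power_mono) auto
  also have "\<dots> = 2 * (U * U * U) * (2 * U) ^ G" by (simp add: algebra_simps)
  also have "\<dots> \<le> (2 * U) ^ 3 * (2 * U) ^ G" by (intro mult_right_mono) (simp_all add: power3_eq_cube)
  also have "\<dots> = (2 * U) ^ (G + 3)" by (simp add: power_add mult.commute)
  also have "\<dots> = 2 ^ ((2 ^ X + 1) * (G + 3))" unfolding U_def by (simp add: power_mult power_add)
  also have "\<dots> \<le> 2 ^ 2 ^ ((g + 2) * (Suc d + 1))"
  proof (rule power_increasing)
    have "G + 3 \<le> 2 ^ (g + 1)" unfolding G_def using less_exp[of "g + 1"] assms by simp
    then have "(2 ^ X + 1) * (G + 3) \<le> 2 ^ (X + 1) * 2 ^ (g + 1)" by (intro mult_mono) simp_all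
    also have "\<dots> = 2 ^ ((g + 2) * (Suc d + 1))" unfolding X_def by (simp add: power_add[symmetric] algebra_simps)
    finally show "(2 ^ X + 1) * (G + 3) \<le> 2 ^ ((g + 2) * (Suc d + 1))" .
  qed simp
  finally show ?case .
qed

lemma ln_ln_le:
  assumes "3 \<le> n" "real n \<le> 2 ^ (2 ^ Y + 1)"
  shows "ln (ln (real n)) \<le> real Y + 1"
proof -
  have ln2: "ln (2::real) \<le> 1" using ln_le_minus_one[of 2] by simp
  have "ln (real n) \<le> ln (2 ^ (2 ^ Y + 1))" using assms by (intro ln_mono) auto
  also have "\<dots> = real (2 ^ Y + 1) * ln 2" by (rule ln_realpow)
  also have "\<dots> \<le> real (2 ^ Y + 1)" using ln2 by (intro mult_left_le) auto
  also have "\<dots> \<le> 2 ^ (Y + 1)" by simp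
  finally have "ln (real n) \<le> 2 ^ (Y + 1)" .
  moreover have "0 < ln (real n)" using assms(1) by (intro ln_gt_zero) simp
  ultimately have "ln (ln (real n)) \<le> ln (2 ^ (Y + 1))" by (intro ln_mono) auto
  also have "\<dots> = real (Y + 1) * ln 2" by (rule ln_realpow)
  also have "\<dots> \<le> real (Y + 1)" using ln2 by (intro mult_left_le) auto
  finally show ?thesis by simp
qed

lemma ln_ln_le_level:
  assumes "3 \<le> g" "3 \<le> n" "n < 2 * level_size g (Suc d)"
  shows "ln (ln (real n)) \<le> (2 * real (g + 2) + 1) * real (Suc d)"
proof -
  define Y where "Y = (g + 2) * (d + 2)"
  have "(g + 2) * (Suc d + 1) = Y" unfolding Y_def by simp
  then have "n \<le> 2 * 2 ^ 2 ^ Y" using assms(3) level_size_le[OF assms(1), of "Suc d"] by simp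
  then have "real n \<le> 2 ^ (2 ^ Y + 1)" by (metis of_nat_le_iff of_nat_numeral of_nat_power power_Suc Suc_eq_plus1)
  then have "ln (ln (real n)) \<le> real Y + 1" by (rule ln_ln_le[OF assms(2)])
  also have "\<dots> \<le> (2 * real (g + 2) + 1) * real (Suc d)" unfolding Y_def by (simp add: algebra_simps)
  finally show ?thesis .
qed

theorem theorem5p3:
  fixes g :: nat
  assumes "0 < g"
  shows "\<exists>c::real. c > 0 \<and>
    (\<forall>n::nat. 3 \<le> n \<longrightarrow>
      (\<exists>P :: (real \<times> real) set. \<exists>R :: (real \<times> real) set set.
         finite P \<and> card P = n \<and> finite R \<and> card R = n \<and>
         (\<forall>S\<in>R. is_open_rect S) \<and>
         girth_at_least (incidence_adj P R) g \<and>
         real (incidence_edges P R) \<ge> c * real n * ln (ln (real n))))"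
proof -
  define g' where "g' = max g 3"
  define c :: real where "c = 1 / (4 * (2 * real (g' + 2) + 1))"
  have g': "3 \<le> g'" "g \<le> g'" unfolding g'_def by simp_all
  have "\<exists>P R. finite P \<and> card P = n \<and> finite R \<and> card R = n \<and> (\<forall>S\<in>R. is_open_rect S) \<and>
      girth_at_least (incidence_adj P R) g \<and> real (incidence_edges P R) \<ge> c * real n * ln (ln (real n))"
    if "3 \<le> n" for n
  proof -
    have "2 \<le> g'" "2 \<le> n" using g'(1) that by simp_all
    then obtain d where d: "2 * level_size g' d \<le> n" "n < 2 * level_size g' (Suc d)"
      using exists_level_bracket by blast
    obtain P R where PR: "rect_config P R" "card P = n" "card R = n" "girth_at_least (incidence_adj P R) g'"
      and edges: "real (Suc d) * real n \<le> 4 * real (incidence_edges P R)"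
      using exists_config_of_size[OF g'(1) d(1)] by blast
    have "c * real n * ln (ln (real n)) \<le> c * real n * ((2 * real (g' + 2) + 1) * real (Suc d))"
      using ln_ln_le_level[OF g'(1) that d(2)] unfolding c_def by (intro mult_left_mono) auto
    also have "\<dots> = real (Suc d) * real n / 4" unfolding c_def by (simp add: field_simps)
    finally have "c * real n * ln (ln (real n)) \<le> real (incidence_edges P R)" using edges by linarith
    then show ?thesis using PR girth_at_least_le[OF PR(4) g'(2)] unfolding rect_config_def by blast
  qed
  moreover have "c > 0" unfolding c_def by simp
  ultimately show ?thesis by blast
qed

end
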